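(* Let $\Omega\subset\mathbb{R}^d$ be a bounded domain, $\gamma>0$, $G:\mathbb{R}^2\to\mathbb{R}$ smooth with $\|G\|_\infty+\|\nabla G\|_\infty\le1$, and $I\in\mathcal{C}_b(\Omega)$ with $I(x)>0$ for almost every $x\in\Omega$. Let $n_0\in\mathcal{C}_b(\Omega,L^1_s)$, $n_0\ge0$, $w_0\in\mathcal{C}_b(\Omega\times\Omega)$, $w_0\ge0$, with $g(x)=\int_0^\infty n_0(s,x)ds$ satisfying $\int_\Omega g=1$. Assume $p\in W^{1,\infty}((0,\infty)\times\mathbb{R})$ satisfies $p_*\mathbb{1}_{\{s>s_*\}}\le p(s,S)\le p_\infty$ for all $s,S$, for constants $p_*,p_\infty,s_*>0$, and that $p(s,\infty):=\lim_{S\to\infty}p(s,S)$ exists for all $s\ge0$. For $k>0$ let $n^k$ be a solution of $$\begin{cases}\partial_t n+\partial_s n+p(s,S(t,x))n=0,\\ N(t,x)=n(t,0,x)=\int_0^\infty p(s,S(t,x))n\,ds,\\ S(t,x)=\int_\Omega w(t,x,y)N(t,y)\,dy+kI(x),\\ \partial_t w=-w+\gamma G(N(t,x),N(t,y)),\\ n(0)=n_0,\ w(0)=w_0,\end{cases}$$ and let $n^\infty$ be the solution of the linear problem $$\begin{cases}\partial_t n+\partial_s n+p(s,\infty)n=0,& t>0,s>0,x\in\Omega,\\ N(t,x)=n(t,0,x)=\int_0^\infty p(s,\infty)n\,ds,\\ n(0,s,x)=n_0(s,x).\end{cases}$$ Then for all $t>0$, $n^k(t)\to n^\infty(t)$ in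 $L^1_{s,x}$ as $k\to\infty$.
   Context: $L^1_s=L^1((0,\infty))$ in $s$, $L^1_{s,x}=L^1((0,\infty)\times\Omega)$; $\mathcal{C}_b$ denotes bounded continuous functions. Solutions are understood in the weak (characteristics/Duhamel) sense. *)

theory Defs
  imports "HOL-Analysis.Analysis"
begin

definition bounded_domain :: "'d::euclidean_space set \<Rightarrow> bool" where
  "bounded_domain \<Omega> \<longleftrightarrow> \<Omega> \<noteq> {} \<and> open \<Omega> \<and> connected \<Omega> \<and> bounded \<Omega>"

definition smooth2 :: "(real \<Rightarrow> real \<Rightarrow> real) \<Rightarrow> (nat \<Rightarrow> nat \<Rightarrow> real \<Rightarrow> real \<Rightarrow> real) \<Rightarrow> bool" where
  "smooth2 G D \<longleftrightarrow> D 0 0 = G \<and>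
     (\<forall>i j x y. ((\<lambda>u. D i j u y) has_real_derivative D (Suc i) j x y) (at x)) \<and>
     (\<forall>i j x y. ((\<lambda>v. D i j x v) has_real_derivative D i (Suc j) x y) (at y)) \<and>
     (\<forall>i j. continuous_on UNIV (\<lambda>z. D i j (fst z) (snd z)))"

definition Cb_L1 :: "'d::euclidean_space set \<Rightarrow> (real \<Rightarrow> 'd \<Rightarrow> real) \<Rightarrow> bool" where
  "Cb_L1 \<Omega> f \<longleftrightarrow>
     (\<forall>x\<in>\<Omega>. set_integrable lborel {0<..} (\<lambda>s. f s x)) \<and>
     (\<forall>x\<in>\<Omega>. \<forall>e>0. \<exists>\<delta>>0. \<forall>y\<in>\<Omega>. dist y x < \<delta> \<longrightarrow>
          (LINT s:{0<..}|lborel. \<bar>f s y - f s x\<bar>) < e) \<and>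
     (\<exists>B. \<forall>x\<in>\<Omega>. (LINT s:{0<..}|lborel. \<bar>f s x\<bar>) \<le> B)"

text \<open>Weak (characteristics) solution of the age-structured equation
   d_t n + d_s n + a(t,s,x) n = 0,  N(t,x) = n(t,0,x) = int_0^inf a(t,s,x) n ds,  n(0)=n0,
  with N continuous on [0,inf) x Omega and bounded on [0,T] x Omega for every T, and
  n(t) in L^1((0,inf) x Omega) for each t.\<close>
definition renewal_char ::
  "(real \<Rightarrow> real \<Rightarrow> 'd::euclidean_space \<Rightarrow> real) \<Rightarrow> (real \<Rightarrow> 'd \<Rightarrow> real) \<Rightarrow> 'd set
    \<Rightarrow> (real \<Rightarrow> real \<Rightarrow> 'd \<Rightarrow> real) \<Rightarrow> (real \<Rightarrow> 'd \<Rightarrow> real) \<Rightarrow> bool" where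
  "renewal_char a n0 \<Omega> n N \<longleftrightarrow>
     (\<forall>t\<ge>0. \<forall>x\<in>\<Omega>.
        (AE s in lborel. s > 0 \<longrightarrow>
           n t s x = (if t < s
                      then n0 (s - t) x * exp (- integral {0..t} (\<lambda>\<tau>. a \<tau> (s - t + \<tau>) x))
                      else N (t - s) x * exp (- integral {0..s} (\<lambda>\<sigma>. a (t - s + \<sigma>) \<sigma> x)))) \<and>
        set_integrable lborel {0<..} (\<lambda>s. n t s x) \<and>
        N t x = (LINT s:{0<..}|lborel. a t s x * n t s x)) \<and>
     (\<forall>t\<ge>0. integrable (lebesgue_on ({0<..} \<times> \<Omega>)) (\<lambda>z. n t (fst z) (snd z))) \<and>
     continuous_on ({0..} \<times> \<Omega>) (\<lambda>z. N (fst z) (snd z)) \<and>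
     (\<forall>T. bounded ((\<lambda>z. N (fst z) (snd z)) ` ({0..T} \<times> \<Omega>)))"

text \<open>Solution of the nonlinear system with parameter k (w via Duhamel's formula).\<close>
definition nonlinear_solution ::
  "(real \<Rightarrow> real \<Rightarrow> real) \<Rightarrow> (real \<Rightarrow> real \<Rightarrow> real) \<Rightarrow> real \<Rightarrow> ('d::euclidean_space \<Rightarrow> real)
    \<Rightarrow> real \<Rightarrow> 'd set \<Rightarrow> (real \<Rightarrow> 'd \<Rightarrow> real) \<Rightarrow> ('d \<Rightarrow> 'd \<Rightarrow> real)
    \<Rightarrow> (real \<Rightarrow> real \<Rightarrow> 'd \<Rightarrow> real) \<Rightarrow> bool" where
  "nonlinear_solution p G \<gamma> I k \<Omega> n0 w0 n \<longleftrightarrow>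
     (\<exists>N w S.
        renewal_char (\<lambda>t s x. p s (S t x)) n0 \<Omega> n N \<and>
        continuous_on ({0..} \<times> \<Omega> \<times> \<Omega>) (\<lambda>z. w (fst z) (fst (snd z)) (snd (snd z))) \<and>
        (\<forall>T. bounded ((\<lambda>z. w (fst z) (fst (snd z)) (snd (snd z))) ` ({0..T} \<times> \<Omega> \<times> \<Omega>))) \<and>
        (\<forall>t\<ge>0. \<forall>x\<in>\<Omega>. S t x = (LINT y:\<Omega>|lebesgue. w t x y * N t y) + k * I x) \<and>
        (\<forall>t\<ge>0. \<forall>x\<in>\<Omega>. \<forall>y\<in>\<Omega>.
           w t x y = exp (- t) * w0 x y
                     + \<gamma> * integral {0..t} (\<lambda>\<tau>. exp (- (t - \<tau>)) * G (N \<tau> x) (N \<tau> y))))"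

definition linear_solution ::
  "(real \<Rightarrow> real) \<Rightarrow> 'd::euclidean_space set \<Rightarrow> (real \<Rightarrow> 'd \<Rightarrow> real)
    \<Rightarrow> (real \<Rightarrow> real \<Rightarrow> 'd \<Rightarrow> real) \<Rightarrow> bool" where
  "linear_solution pinf \<Omega> n0 n \<longleftrightarrow> (\<exists>N. renewal_char (\<lambda>t s x. pinf s) n0 \<Omega> n N)"

end

theory Submission
  imports Defs
begin

text \<open>
  Along each fibre \<open>x \<in> \<Omega>\<close> the density solves a linear renewal equation in which \<open>k\<close> enters
  only through the rate \<open>p(s, S\<^sup>k(t, x))\<close>. The synaptic weights grow at most linearly in time,
  uniformly in \<open>k\<close>, so \<open>S\<^sup>k(t, x) \<ge> k I(x) - K(t) \<rightarrow> \<infinity>\<close> wherever \<open>I(x) > 0\<close>, and the rates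
  converge to \<open>p(s, \<infinity>)\<close>. Written along characteristics, the difference of the boundary
  fluxes \<open>|N\<^sup>k - N\<^sup>\<infinity>|\<close> satisfies a Gronwall inequality whose source tends to zero by dominated
  convergence; hence \<open>N\<^sup>k \<rightarrow> N\<^sup>\<infinity>\<close> pointwise, and a second dominated convergence gives
  \<open>n\<^sup>k(t, \<cdot>, x) \<rightarrow> n\<^sup>\<infinity>(t, \<cdot>, x)\<close> in \<open>L\<^sup>1\<close>. These fibrewise distances are bounded uniformly,
  so Fubini and dominated convergence over \<open>\<Omega>\<close> give convergence in \<open>L\<^sup>1((0, \<infinity>) \<times> \<Omega>)\<close>.
\<close>

lemma gronwall_inequality:
  fixes F :: "real \<Rightarrow> real"
  assumes cont: "continuous_on {0..T} F" and c: "c \<ge> 0"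
    and le: "\<And>\<tau>. \<tau> \<in> {0..T} \<Longrightarrow> F \<tau> \<le> A + c * integral {0..\<tau>} F"
    and tau: "\<tau> \<in> {0..T}"
  shows "F \<tau> \<le> A * exp (c * \<tau>)"
proof -
  define H where "H = (\<lambda>u. exp (- c * u) * (A + c * integral {0..u} F))"
  have "continuous_on {0..\<tau>} H"
    unfolding H_def using tau
    by (intro continuous_intros indefinite_integral_continuous_1 integrable_continuous_real
        continuous_on_subset[OF cont]) auto
  have "H \<tau> \<le> H 0"
  proof (rule DERIV_nonpos_imp_decreasing_open[of 0 \<tau> H])
    show "0 \<le> \<tau>" using tau by auto
    show "continuous_on {0..\<tau>} H" by fact
    fix x assume x: "0 < x" "x < \<tau>"
    have "continuous_on {0..\<tau>} F" using tau by (intro continuous_on_subset[OF cont]) auto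
    then have "((\<lambda>u. integral {0..u} F) has_real_derivative F x) (at x within {0..\<tau>})"
      using x by (intro integral_has_real_derivative) auto
    then have "((\<lambda>u. integral {0..u} F) has_real_derivative F x) (at x)"
      using x by (simp add: at_within_Icc_at)
    then have "(H has_real_derivative c * exp (- c * x) * (F x - (A + c * integral {0..x} F))) (at x)"
      unfolding H_def by (auto intro!: derivative_eq_intros simp: algebra_simps)
    moreover have "c * exp (- c * x) * (F x - (A + c * integral {0..x} F)) \<le> 0"
      using le[of x] x tau c by (intro mult_nonneg_nonpos) auto
    ultimately show "\<exists>y. (H has_real_derivative y) (at x) \<and> y \<le> 0" by blast
  qed
  then have "A + c * integral {0..\<tau>} F \<le> A * exp (c * \<tau>)"
    by (simp add: H_def exp_minus field_simps)
  with le[OF tau] show ?thesis by linarith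
qed

lemma exp_neg_integral_le_1:
  fixes f :: "real \<Rightarrow> real"
  assumes "\<And>x. x \<in> S \<Longrightarrow> 0 \<le> f x"
  shows "exp (- integral S f) \<le> 1"
proof (cases "f integrable_on S")
  case True
  then have "0 \<le> integral S f" using assms by (rule integral_nonneg)
  then show ?thesis by simp
qed (simp add: not_integrable_integral)

lemma abs_integral_le_const:
  fixes f :: "real \<Rightarrow> real"
  assumes "0 \<le> \<sigma>" "\<And>u. u \<in> {0..\<sigma>} \<Longrightarrow> \<bar>f u\<bar> \<le> M"
  shows "\<bar>integral {0..\<sigma>} f\<bar> \<le> M * \<sigma>"
proof (cases "f integrable_on {0..\<sigma>}")
  case True
  have "norm (integral {0..\<sigma>} f) \<le> integral {0..\<sigma>} (\<lambda>_. M)"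
    by (rule integral_norm_bound_integral[OF True integrable_const_ivl]) (use assms in auto)
  then show ?thesis using assms(1) by (simp add: mult.commute)
next
  case False
  have "0 \<le> M" using assms(2)[of 0] assms(1) by auto
  then show ?thesis using False assms(1) by (simp add: not_integrable_integral)
qed

lemma set_lebesgue_integral_real:
  "(LINT s:A|M. f s) = integral\<^sup>L M (\<lambda>s. indicator A s * (f s :: real))"
  by (simp add: set_lebesgue_integral_def)

lemma set_integrable_real:
  "set_integrable M A (f :: _ \<Rightarrow> real) \<longleftrightarrow> integrable M (\<lambda>s. indicator A s * f s)"
  by (simp add: set_integrable_def)

lemma abs_set_integral_le_measure:
  fixes f :: "'d::euclidean_space \<Rightarrow> real"
  assumes \<Omega>: "\<Omega> \<in> sets lebesgue" "emeasure lebesgue \<Omega> < \<infinity>"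
    and bound: "\<And>y. y \<in> \<Omega> \<Longrightarrow> \<bar>f y\<bar> \<le> M"
  shows "\<bar>LINT y:\<Omega>|lebesgue. f y\<bar> \<le> M * measure lebesgue \<Omega>"
proof (cases "\<Omega> = {}")
  case False
  then have M: "0 \<le> M"
    using bound by force
  have "\<bar>LINT y:\<Omega>|lebesgue. f y\<bar> \<le> integral\<^sup>L lebesgue (\<lambda>y. norm (indicator \<Omega> y * f y))"
    unfolding set_lebesgue_integral_real by (metis integral_norm_bound real_norm_def)
  also have "\<dots> \<le> integral\<^sup>L lebesgue (\<lambda>y. M * indicator \<Omega> y)"
  proof (rule integral_mono')
    show "integrable lebesgue (\<lambda>y. M * indicator \<Omega> y)"
      using integrable_real_indicator[OF \<Omega>] by simp
  qed (use bound M in \<open>auto simp: indicator_def\<close>)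
  also have "\<dots> = M * measure lebesgue \<Omega>"
    using \<Omega> by simp
  finally show ?thesis .
qed (simp add: set_lebesgue_integral_real)

lemma lborel_integrable_shift_Ioi:
  fixes f :: "real \<Rightarrow> real"
  assumes "integrable lborel (\<lambda>s. indicator {0<..} s * f s)"
  shows "integrable lborel (\<lambda>s. indicator {\<tau><..} s * f (s - \<tau>))"
proof -
  have "integrable lborel (\<lambda>x. (\<lambda>s. indicator {0<..} s * f s) (- \<tau> + 1 * x))"
    by (rule lborel_integrable_real_affine[OF assms]) simp
  moreover have "(\<lambda>x. (\<lambda>s. indicator {0<..} s * f s) (- \<tau> + 1 * x)) =
      (\<lambda>s. indicator {\<tau><..} s * f (s - \<tau>))"
    by (auto simp: indicator_def fun_eq_iff)
  ultimately show ?thesis by simp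
qed

lemma lborel_integral_shift_Ioi:
  fixes f :: "real \<Rightarrow> real"
  shows "integral\<^sup>L lborel (\<lambda>s. indicator {\<tau><..} s * f (s - \<tau>)) =
    integral\<^sup>L lborel (\<lambda>s. indicator {0<..} s * f s)"
proof -
  have "integral\<^sup>L lborel (\<lambda>s. indicator {\<tau><..} s * f (s - \<tau>)) =
      \<bar>1\<bar> *\<^sub>R integral\<^sup>L lborel (\<lambda>x. (\<lambda>s. indicator {\<tau><..} s * f (s - \<tau>)) (\<tau> + 1 * x))"
    by (rule lborel_integral_real_affine) simp
  moreover have "(\<lambda>x. (\<lambda>s. indicator {\<tau><..} s * f (s - \<tau>)) (\<tau> + 1 * x)) =
      (\<lambda>s. indicator {0<..} s * f s)"
    by (auto simp: indicator_def fun_eq_iff)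
  ultimately show ?thesis by simp
qed

lemma lborel_integral_reflect_Icc:
  fixes f :: "real \<Rightarrow> real"
  assumes "continuous_on {0..\<tau>} f"
  shows "integrable lborel (\<lambda>s. indicator {0..\<tau>} s * f (\<tau> - s))"
    and "integral\<^sup>L lborel (\<lambda>s. indicator {0..\<tau>} s * f (\<tau> - s)) = integral {0..\<tau>} f"
proof -
  have "continuous_on {0..\<tau>} (\<lambda>s. f (\<tau> - s))"
    by (intro continuous_on_compose2[OF assms] continuous_intros) auto
  from borel_integrable_compact[OF _ this]
  show "integrable lborel (\<lambda>s. indicator {0..\<tau>} s * f (\<tau> - s))"
    by simp
  have f_int: "integrable lborel (\<lambda>s. indicator {0..\<tau>} s * f s)"
    using borel_integrable_compact[OF _ assms] by simp
  have "integral\<^sup>L lborel (\<lambda>s. indicator {0..\<tau>} s * f s) =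
      \<bar>-1\<bar> *\<^sub>R integral\<^sup>L lborel (\<lambda>x. (\<lambda>s. indicator {0..\<tau>} s * f s) (\<tau> + (-1) * x))"
    by (rule lborel_integral_real_affine) simp
  moreover have "(\<lambda>x. (\<lambda>s. indicator {0..\<tau>} s * f s) (\<tau> + (-1) * x)) =
      (\<lambda>s. indicator {0..\<tau>} s * f (\<tau> - s))"
    by (auto simp: indicator_def fun_eq_iff)
  moreover have "integral\<^sup>L lborel (\<lambda>s. indicator {0..\<tau>} s * f s) = integral {0..\<tau>} f"
    using set_borel_integral_eq_integral(2)[of "{0..\<tau>}" f] f_int
    by (simp add: set_integrable_def set_lebesgue_integral_def)
  ultimately show "integral\<^sup>L lborel (\<lambda>s. indicator {0..\<tau>} s * f (\<tau> - s)) = integral {0..\<tau>} f"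
    by simp
qed

lemma lborel_dominated_convergence_zero:
  fixes f :: "nat \<Rightarrow> real \<Rightarrow> real" and w :: "real \<Rightarrow> real"
  assumes "\<And>i. f i \<in> borel_measurable borel" "integrable lborel w"
    and "AE x in lborel. (\<lambda>i. f i x) \<longlonglongrightarrow> 0"
    and "\<And>i. AE x in lborel. norm (f i x) \<le> w x"
  shows "(\<lambda>i. integral\<^sup>L lborel (f i)) \<longlonglongrightarrow> 0" and "\<And>i. integrable lborel (f i)"
  using Bochner_Integration.integral_dominated_convergence[where f="\<lambda>_. 0::real", OF _ _ assms(2-4)]
    Bochner_Integration.integrable_dominated_convergence2[where f="\<lambda>_. 0::real", OF _ _ assms(2-4)]
    assms(1)
  by simp_all

lemma continuous_on_set_integral_parameter:
  fixes W :: "real \<Rightarrow> 'd::euclidean_space \<Rightarrow> real"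
  assumes \<Omega>: "\<Omega> \<in> sets borel" "emeasure lborel \<Omega> < \<infinity>"
    and cont: "continuous_on ({0..} \<times> \<Omega>) (\<lambda>z. W (fst z) (snd z))"
    and bound: "\<And>T. \<exists>M. \<forall>\<sigma>\<in>{0..T}. \<forall>y\<in>\<Omega>. \<bar>W \<sigma> y\<bar> \<le> M"
  shows "continuous_on {0..} (\<lambda>\<sigma>. LINT y:\<Omega>|lebesgue. W \<sigma> y)"
  unfolding continuous_on_sequentially
proof (intro allI ballI impI)
  fix x :: "nat \<Rightarrow> real" and a :: real
  assume a: "a \<in> {0..}" and "(\<forall>n. x n \<in> {0..}) \<and> x \<longlonglongrightarrow> a"
  then have x: "\<And>n. x n \<in> {0..}" and lim: "x \<longlonglongrightarrow> a" by auto
  obtain K where K: "\<And>n. norm (x n) \<le> K"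
    using BseqD[OF convergent_imp_Bseq[OF convergentI[OF lim]]] by auto
  obtain M where M: "\<And>\<sigma> y. \<sigma> \<in> {0..K} \<Longrightarrow> y \<in> \<Omega> \<Longrightarrow> \<bar>W \<sigma> y\<bar> \<le> M"
    using bound[of K] by blast
  have meas: "(\<lambda>y. indicator \<Omega> y * W \<sigma> y) \<in> borel_measurable lebesgue" if "0 \<le> \<sigma>" for \<sigma>
  proof -
    have "continuous_on \<Omega> (\<lambda>y. (\<lambda>z. W (fst z) (snd z)) (\<sigma>, y))"
      by (rule continuous_on_compose2[OF cont]) (use that in \<open>auto intro!: continuous_intros\<close>)
    then have "continuous_on \<Omega> (\<lambda>y. W \<sigma> y)"
      by simp
    then have "(\<lambda>y. indicator \<Omega> y *\<^sub>R W \<sigma> y) \<in> borel_measurable borel"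
      by (rule borel_measurable_continuous_on_indicator[OF \<Omega>(1)])
    then show ?thesis
      by (intro measurable_completion) simp
  qed
  have dom: "integrable lebesgue (\<lambda>y. M * indicator \<Omega> y)"
    using \<Omega> integrable_real_indicator[of \<Omega> lebesgue] by (simp add: emeasure_completion)
  have lim: "AE y in lebesgue. (\<lambda>n. indicator \<Omega> y * W (x n) y) \<longlonglongrightarrow> indicator \<Omega> y * W a y"
  proof (intro AE_I2)
    fix y
    show "(\<lambda>n. indicator \<Omega> y * W (x n) y) \<longlonglongrightarrow> indicator \<Omega> y * W a y"
    proof (cases "y \<in> \<Omega>")
      case True
      have "(\<lambda>n. (x n, y)) \<longlonglongrightarrow> (a, y)" by (intro tendsto_Pair lim tendsto_const)
      then have "((\<lambda>z. W (fst z) (snd z)) \<circ> (\<lambda>n. (x n, y))) \<longlonglongrightarrow> W a y"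
        using cont[unfolded continuous_on_sequentially] x a True by force
      then show ?thesis using True by (simp add: comp_def)
    qed simp
  qed
  have le: "AE y in lebesgue. norm (indicator \<Omega> y * W (x n) y) \<le> M * indicator \<Omega> y" for n
    using M x[of n] K[of n] by (intro AE_I2) (auto simp: indicator_def)
  have "(\<lambda>n. integral\<^sup>L lebesgue (\<lambda>y. indicator \<Omega> y * W (x n) y)) \<longlonglongrightarrow>
      integral\<^sup>L lebesgue (\<lambda>y. indicator \<Omega> y * W a y)"
    using Bochner_Integration.integral_dominated_convergence[OF meas meas dom lim le] a x by simp
  then show "((\<lambda>\<sigma>. LINT y:\<Omega>|lebesgue. W \<sigma> y) \<circ> x) \<longlonglongrightarrow> (LINT y:\<Omega>|lebesgue. W a y)"
    by (simp add: set_lebesgue_integral_real comp_def)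
qed

lemma gronwall_integral:
  fixes D e :: "real \<Rightarrow> real"
  assumes t: "0 \<le> t" and c: "0 \<le> c"
    and D: "continuous_on {0..t} D"
    and e: "continuous_on {0..t} e" "\<And>u. u \<in> {0..t} \<Longrightarrow> 0 \<le> e u"
    and le: "\<And>u. u \<in> {0..t} \<Longrightarrow> D u \<le> e u + c * integral {0..u} D"
  shows "integral {0..t} D \<le> integral {0..t} e * exp (c * t)"
proof -
  define F where "F u = integral {0..u} D" for u
  have F: "continuous_on {0..t} F"
    unfolding F_def by (intro indefinite_integral_continuous_1 integrable_continuous_real D)
  have "F t \<le> integral {0..t} e * exp (c * t)"
  proof (rule gronwall_inequality[OF F c])
    fix u assume u: "u \<in> {0..t}"
    have D': "continuous_on {0..u} D" and e': "continuous_on {0..u} e" and F': "continuous_on {0..u} F"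
      using u by (auto intro: continuous_on_subset[OF D] continuous_on_subset[OF e(1)]
          continuous_on_subset[OF F])
    have "F u \<le> integral {0..u} (\<lambda>v. e v + c * F v)"
      unfolding F_def[of u] using u le
      by (intro integral_le integrable_continuous_real D' continuous_intros e' F') (auto simp: F_def)
    also have "\<dots> = integral {0..u} e + c * integral {0..u} F"
    proof -
      have "(\<lambda>v. c * F v) integrable_on {0..u}"
        by (intro integrable_continuous_real continuous_intros F')
      then show ?thesis
        using integral_add[OF integrable_continuous_real[OF e']] by simp
    qed
    also have "integral {0..u} e \<le> integral {0..t} e"
      using u e(2) by (intro integral_subset_le integrable_continuous_real e e') auto
    finally show "F u \<le> integral {0..t} e + c * integral {0..u} F"
      by simp
  qed (use t in auto)
  then show ?thesis
    by (simp add: F_def)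
qed

lemma gronwall_tendsto_zero:
  fixes D E :: "nat \<Rightarrow> real \<Rightarrow> real"
  assumes t: "0 \<le> t" and c: "0 \<le> c"
    and D_cont: "\<And>k. continuous_on {0..t} (D k)"
    and D_nonneg: "\<And>k u. u \<in> {0..t} \<Longrightarrow> 0 \<le> D k u"
    and D_bound: "\<And>k u. u \<in> {0..t} \<Longrightarrow> D k u \<le> M"
    and D_le: "\<And>k u. u \<in> {0..t} \<Longrightarrow> D k u \<le> E k u + c * integral {0..u} (D k)"
    and E_tendsto: "\<And>u. u \<in> {0..t} \<Longrightarrow> (\<lambda>k. E k u) \<longlonglongrightarrow> 0"
  shows "(\<lambda>k. D k t) \<longlonglongrightarrow> 0"
proof -
  define F where "F k u = integral {0..u} (D k)" for k u
  define e where "e k u = max 0 (D k u - c * F k u)" for k u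
  have F_nonneg: "0 \<le> F k u" if "u \<in> {0..t}" for k u
    unfolding F_def using that D_nonneg
    by (intro integral_nonneg integrable_continuous_real continuous_on_subset[OF D_cont]) auto
  have e_cont: "continuous_on {0..t} (e k)" for k
    unfolding e_def F_def
    by (intro continuous_intros indefinite_integral_continuous_1 integrable_continuous_real D_cont)
  have e_tendsto: "(\<lambda>k. e k u) \<longlonglongrightarrow> 0" if "u \<in> {0..t}" for u
  proof (rule tendsto_sandwich[OF always_eventually always_eventually tendsto_const])
    show "\<forall>k. e k u \<le> max 0 (E k u)"
    proof
      fix k
      show "e k u \<le> max 0 (E k u)"
        using D_le[OF that, of k] by (simp add: e_def F_def)
    qed
    show "(\<lambda>k. max 0 (E k u)) \<longlonglongrightarrow> 0"
      using tendsto_max[OF tendsto_const[of 0] E_tendsto[OF that]] by simp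
  qed (simp add: e_def)
  have "(\<lambda>k. integral {0..t} (e k)) \<longlonglongrightarrow> integral {0..t} (\<lambda>_. 0::real)"
  proof (rule dominated_convergence(2)[where h="\<lambda>_. M"])
    show "norm (e k u) \<le> M" if "u \<in> {0..t}" for k u
      using D_bound[OF that, of k] D_nonneg[OF that, of k] mult_nonneg_nonneg[OF c F_nonneg[OF that, of k]]
      by (simp add: e_def)
  qed (use e_cont e_tendsto in \<open>auto intro: integrable_continuous_real\<close>)
  then have int_e_tendsto: "(\<lambda>k. integral {0..t} (e k) * exp (c * t)) \<longlonglongrightarrow> 0"
    by (simp add: tendsto_mult_left_zero)
  have F_le: "F k t \<le> integral {0..t} (e k) * exp (c * t)" for k
    unfolding F_def using D_le
    by (intro gronwall_integral[OF t c D_cont e_cont]) (auto simp: e_def F_def)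
  have F_tendsto: "(\<lambda>k. F k t) \<longlonglongrightarrow> 0"
  proof (rule tendsto_sandwich[OF always_eventually always_eventually tendsto_const int_e_tendsto])
    show "\<forall>k. 0 \<le> F k t"
      using F_nonneg t by simp
    show "\<forall>k. F k t \<le> integral {0..t} (e k) * exp (c * t)"
      using F_le by simp
  qed
  show ?thesis
  proof (rule tendsto_sandwich[OF always_eventually always_eventually tendsto_const])
    show "(\<lambda>k. e k t + c * F k t) \<longlonglongrightarrow> 0"
      using tendsto_add[OF e_tendsto tendsto_mult_right_zero[OF F_tendsto]] t by simp
  qed (use D_nonneg t in \<open>auto simp: e_def\<close>)
qed

lemma AE_lborel_prod_swap:
  fixes Q :: "real \<times> 'd::euclidean_space \<Rightarrow> bool"
  assumes "AE z in lborel. Q z"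
  shows "AE x in lborel. AE s in lborel. Q (s, x)"
proof -
  have "AE z in (lborel \<Otimes>\<^sub>M lborel :: (real \<times> 'd) measure). Q z"
    unfolding lborel_prod by (rule assms)
  then obtain N where N: "{z \<in> space (lborel \<Otimes>\<^sub>M lborel :: (real \<times> 'd) measure). \<not> Q z} \<subseteq> N"
    "emeasure (lborel \<Otimes>\<^sub>M lborel :: (real \<times> 'd) measure) N = 0"
    "N \<in> sets (lborel \<Otimes>\<^sub>M lborel :: (real \<times> 'd) measure)"
    by (rule AE_E)
  have "AE z in (lborel \<Otimes>\<^sub>M lborel :: (real \<times> 'd) measure). z \<notin> N"
    by (rule AE_I'[of N]) (use N in auto)
  then have "AE s in lborel. AE x in lborel. (s, x) \<notin> N"
    by (rule lborel_pair.AE_pair)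
  moreover have "{z \<in> space (lborel \<Otimes>\<^sub>M lborel :: (real \<times> 'd) measure). (fst z, snd z) \<notin> N} =
      space (lborel \<Otimes>\<^sub>M lborel) - N"
    by auto
  ultimately have "AE x in lborel. AE s in lborel. (s, x) \<notin> N"
    using lborel_pair.AE_commute[of "\<lambda>s x. (s, x) \<notin> N"] sets.compl_sets[OF N(3)] by simp
  then show ?thesis
  proof eventually_elim
    case (elim x)
    then show ?case
      by eventually_elim (use N(1) in \<open>auto simp: space_pair_measure\<close>)
  qed
qed

lemma lebesgue_integral_prod_iterated:
  fixes f :: "real \<times> 'd::euclidean_space \<Rightarrow> real"
  assumes f: "integrable lebesgue f"
    and fibres: "\<And>x. (\<lambda>s. f (s, x)) \<in> borel_measurable lborel"
  shows "integrable lebesgue (\<lambda>x. \<integral>s. f (s, x) \<partial>lborel)"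
    and "integral\<^sup>L lebesgue f = (\<integral>x. (\<integral>s. f (s, x) \<partial>lborel) \<partial>lebesgue)"
proof -
  have "f \<in> borel_measurable (completion lborel)"
    using borel_measurable_integrable[OF f] by simp
  then obtain h where h: "h \<in> borel_measurable lborel" and fh: "AE z in lborel. f z = h z"
    using completion_ex_borel_measurable_real by blast
  have fh': "AE z in lebesgue. f z = h z"
    using AE_completion[OF fh] by simp
  have "integrable lebesgue h"
    by (rule integrable_cong_AE_imp[OF f]) (use measurable_completion[OF h] fh' in auto)
  then have "integrable (lborel \<Otimes>\<^sub>M lborel) (\<lambda>(s, x). h (s, x) :: real)"
    using integrable_completion[of h lborel] h by (simp add: lborel_prod)
  note h_fubini = lborel_pair.integrable_snd[OF this] lborel_pair.integral_snd[OF this]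
  define H where "H x = (\<integral>s. h (s, x) \<partial>lborel)" for x
  have H_borel: "integrable lborel H"
    using h_fubini(1) by (simp add: H_def[abs_def])
  then have H_int: "integrable lebesgue H"
    by (simp add: integrable_completion)
  have fibre_eq: "AE x in lebesgue. H x = (\<integral>s. f (s, x) \<partial>lborel)"
  proof (rule AE_completion, rule AE_mp[OF AE_lborel_prod_swap[OF fh]], intro AE_I2 impI)
    fix x assume "AE s in lborel. f (s, x) = h (s, x)"
    moreover have "(\<lambda>s. h (s, x)) \<in> borel_measurable lborel"
      using h by measurable
    ultimately show "H x = (\<integral>s. f (s, x) \<partial>lborel)"
      unfolding H_def using fibres by (intro integral_cong_AE) (auto elim: AE_mp)
  qed
  show "integrable lebesgue (\<lambda>x. \<integral>s. f (s, x) \<partial>lborel)"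
    using H_int borel_measurable_AE[OF borel_measurable_integrable[OF H_int] fibre_eq] fibre_eq
    by (rule integrable_cong_AE_imp)
  have "integral\<^sup>L lebesgue f = integral\<^sup>L lebesgue h"
    using borel_measurable_integrable[OF f] measurable_completion[OF h] fh'
    by (intro integral_cong_AE) auto
  also have "\<dots> = integral\<^sup>L lborel h"
    by (rule integral_completion[OF h])
  also have "\<dots> = integral\<^sup>L lborel H"
    using h_fubini(2) by (simp add: H_def[abs_def] lborel_prod)
  also have "\<dots> = integral\<^sup>L lebesgue H"
    using H_borel by (intro integral_completion[symmetric]) auto
  also have "\<dots> = (\<integral>x. (\<integral>s. f (s, x) \<partial>lborel) \<partial>lebesgue)"
    using H_int borel_measurable_AE[OF borel_measurable_integrable[OF H_int] fibre_eq] fibre_eq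
    by (intro integral_cong_AE) auto
  finally show "integral\<^sup>L lebesgue f = (\<integral>x. (\<integral>s. f (s, x) \<partial>lborel) \<partial>lebesgue)" .
qed

lemma set_integral_Ioi_prod_iterated:
  fixes f :: "real \<Rightarrow> 'd::euclidean_space \<Rightarrow> real"
  assumes \<Omega>: "\<Omega> \<in> sets borel"
    and f: "integrable (lebesgue_on ({0<..} \<times> \<Omega>)) (\<lambda>z. f (fst z) (snd z))"
    and fibres: "\<And>x. x \<in> \<Omega> \<Longrightarrow> set_integrable lborel {0<..} (\<lambda>s. f s x)"
  shows "set_integrable lebesgue \<Omega> (\<lambda>x. LINT s:{0<..}|lborel. f s x)"
    and "(LINT z:({0<..} \<times> \<Omega>)|lebesgue. f (fst z) (snd z)) =
      (LINT x:\<Omega>|lebesgue. LINT s:{0<..}|lborel. f s x)"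
proof -
  define A :: "(real \<times> 'd) set" where "A = {0<..} \<times> \<Omega>"
  have "A \<in> sets (borel \<Otimes>\<^sub>M borel :: (real \<times> 'd) measure)"
    unfolding A_def using \<Omega> by auto
  then have "A \<in> sets borel"
    by (subst (asm) borel_prod)
  then have "integrable lebesgue (\<lambda>z. indicator A z * f (fst z) (snd z))"
    using f unfolding A_def by (subst (asm) integrable_restrict_space) auto
  moreover have "(\<lambda>s. indicator A (s, x) * f s x) =
      (\<lambda>s. indicator \<Omega> x * (indicator {0<..} s * f s x))" for x
    by (auto simp: A_def fun_eq_iff indicator_def)
  moreover have "(\<lambda>s. indicator \<Omega> x * (indicator {0<..} s * f s x)) \<in> borel_measurable lborel" for x
    using fibres[unfolded set_integrable_real] by (cases "x \<in> \<Omega>") auto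
  ultimately have "integrable lebesgue (\<lambda>x. \<integral>s. indicator \<Omega> x * (indicator {0<..} s * f s x) \<partial>lborel) \<and>
      integral\<^sup>L lebesgue (\<lambda>z. indicator A z * f (fst z) (snd z)) =
      (\<integral>x. (\<integral>s. indicator \<Omega> x * (indicator {0<..} s * f s x) \<partial>lborel) \<partial>lebesgue)"
    using lebesgue_integral_prod_iterated[of "\<lambda>z. indicator A z * f (fst z) (snd z)"] by simp
  then show "set_integrable lebesgue \<Omega> (\<lambda>x. LINT s:{0<..}|lborel. f s x)"
    and "(LINT z:({0<..} \<times> \<Omega>)|lebesgue. f (fst z) (snd z)) =
      (LINT x:\<Omega>|lebesgue. LINT s:{0<..}|lborel. f s x)"
    by (simp_all add: set_integrable_real set_lebesgue_integral_real A_def)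
qed

lemma L1_prod_tendsto_zero_of_fibres:
  fixes u :: "nat \<Rightarrow> real \<Rightarrow> 'd::euclidean_space \<Rightarrow> real" and v :: "real \<Rightarrow> 'd \<Rightarrow> real"
  assumes \<Omega>: "\<Omega> \<in> sets borel" "emeasure lborel \<Omega> < \<infinity>"
    and int_u: "\<And>m. integrable (lebesgue_on ({0<..} \<times> \<Omega>)) (\<lambda>z. u m (fst z) (snd z))"
    and int_v: "integrable (lebesgue_on ({0<..} \<times> \<Omega>)) (\<lambda>z. v (fst z) (snd z))"
    and fibre_u: "\<And>m x. x \<in> \<Omega> \<Longrightarrow> set_integrable lborel {0<..} (\<lambda>s. u m s x)"
    and fibre_v: "\<And>x. x \<in> \<Omega> \<Longrightarrow> set_integrable lborel {0<..} (\<lambda>s. v s x)"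
    and conv: "AE x in lebesgue. x \<in> \<Omega> \<longrightarrow>
                 (\<lambda>m. LINT s:{0<..}|lborel. \<bar>u m s x - v s x\<bar>) \<longlonglongrightarrow> 0"
    and bound: "\<And>m x. x \<in> \<Omega> \<Longrightarrow> (LINT s:{0<..}|lborel. \<bar>u m s x - v s x\<bar>) \<le> K"
  shows "(\<lambda>m. LINT z:({0<..} \<times> \<Omega>)|lebesgue. \<bar>u m (fst z) (snd z) - v (fst z) (snd z)\<bar>)
           \<longlonglongrightarrow> 0"
proof -
  define \<Phi> where "\<Phi> m x = indicator \<Omega> x * (LINT s:{0<..}|lborel. \<bar>u m s x - v s x\<bar>)" for m x
  have int: "integrable (lebesgue_on ({0<..} \<times> \<Omega>)) (\<lambda>z. \<bar>u m (fst z) (snd z) - v (fst z) (snd z)\<bar>)" for m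
    using int_u int_v by (intro integrable_abs Bochner_Integration.integrable_diff)
  have fibre: "set_integrable lborel {0<..} (\<lambda>s. \<bar>u m s x - v s x\<bar>)" if "x \<in> \<Omega>" for m x
  proof -
    have "integrable lborel (\<lambda>s. \<bar>indicator {0<..} s * u m s x - indicator {0<..} s * v s x\<bar>)"
      using fibre_u[OF that, of m] fibre_v[OF that] unfolding set_integrable_real
      by (intro integrable_abs Bochner_Integration.integrable_diff)
    then show ?thesis
      unfolding set_integrable_real
      by (rule Bochner_Integration.integrable_cong[OF refl, THEN iffD1, rotated]) (simp add: indicator_def)
  qed
  note iterated = set_integral_Ioi_prod_iterated[OF \<Omega>(1) int fibre]
  have "(\<lambda>m. integral\<^sup>L lebesgue (\<Phi> m)) \<longlonglongrightarrow> integral\<^sup>L lebesgue (\<lambda>_::'d. 0::real)"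
  proof (rule Bochner_Integration.integral_dominated_convergence[where w="\<lambda>x. K * indicator \<Omega> x"])
    show "\<Phi> m \<in> borel_measurable lebesgue" for m
      using iterated(1) unfolding \<Phi>_def[abs_def] set_integrable_real by auto
    show "integrable lebesgue (\<lambda>x. K * indicator \<Omega> x)"
      using integrable_real_indicator[of \<Omega> lborel] \<Omega> by (simp add: integrable_completion)
    show "AE x in lebesgue. (\<lambda>m. \<Phi> m x) \<longlonglongrightarrow> 0"
      using conv by eventually_elim (auto simp: \<Phi>_def indicator_def)
    show "AE x in lebesgue. norm (\<Phi> m x) \<le> K * indicator \<Omega> x" for m
    proof (intro AE_I2)
      fix x
      have "0 \<le> (LINT s:{0<..}|lborel. \<bar>u m s x - v s x\<bar>)"
        unfolding set_lebesgue_integral_real by (intro integral_nonneg_AE AE_I2) simp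
      then show "norm (\<Phi> m x) \<le> K * indicator \<Omega> x"
        using bound[of x m] by (auto simp: \<Phi>_def indicator_def)
    qed
  qed simp
  then show ?thesis
    using iterated(2) by (simp add: \<Phi>_def[abs_def] set_lebesgue_integral_real)
qed

section \<open>The renewal equation along one fibre\<close>

locale renewal_fibre =
  fixes a :: "real \<Rightarrow> real \<Rightarrow> real" and n :: "real \<Rightarrow> real \<Rightarrow> real"
    and N m0 :: "real \<Rightarrow> real" and P B :: real
  assumes a_bounds: "\<And>\<tau> s. 0 \<le> \<tau> \<Longrightarrow> 0 \<le> s \<Longrightarrow> 0 \<le> a \<tau> s \<and> a \<tau> s \<le> P"
    and n_formula: "\<And>\<tau>. 0 \<le> \<tau> \<Longrightarrow> AE s in lborel. s > 0 \<longrightarrow> n \<tau> s =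
       (if \<tau> < s then m0 (s - \<tau>) * exp (- integral {0..\<tau>} (\<lambda>\<sigma>. a \<sigma> (s - \<tau> + \<sigma>)))
        else N (\<tau> - s) * exp (- integral {0..s} (\<lambda>\<sigma>. a (\<tau> - s + \<sigma>) \<sigma>)))"
    and n_integrable: "\<And>\<tau>. 0 \<le> \<tau> \<Longrightarrow> set_integrable lborel {0<..} (n \<tau>)"
    and N_eq: "\<And>\<tau>. 0 \<le> \<tau> \<Longrightarrow> N \<tau> = (LINT s:{0<..}|lborel. a \<tau> s * n \<tau> s)"
    and m0_integrable: "set_integrable lborel {0<..} m0"
    and m0_L1_bound: "(LINT s:{0<..}|lborel. \<bar>m0 s\<bar>) \<le> B"
    and N_continuous: "continuous_on {0..} N"
begin

lemma P_nonneg: "0 \<le> P"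
  using a_bounds[of 0 0] by auto

lemma B_nonneg: "0 \<le> B"
proof -
  have "0 \<le> (LINT s:{0<..}|lborel. \<bar>m0 s\<bar>)"
    unfolding set_lebesgue_integral_real by (intro integral_nonneg_AE) auto
  then show ?thesis using m0_L1_bound by linarith
qed

lemma abs_m0_integrable: "integrable lborel (\<lambda>s. indicator {0<..} s * \<bar>m0 s\<bar>)"
  using integrable_abs[OF m0_integrable[unfolded set_integrable_real]] by (simp add: abs_mult)

lemma abs_n_le:
  assumes "0 \<le> \<tau>"
  shows "AE s in lborel. indicator {0<..} s * \<bar>n \<tau> s\<bar> \<le>
     indicator {\<tau><..} s * \<bar>m0 (s - \<tau>)\<bar> + indicator {0..\<tau>} s * \<bar>N (\<tau> - s)\<bar>"
  using n_formula[OF assms]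
proof eventually_elim
  case (elim s)
  show ?case
  proof (cases "s > 0")
    case True
    show ?thesis
    proof (cases "\<tau> < s")
      case True
      have "exp (- integral {0..\<tau>} (\<lambda>\<sigma>. a \<sigma> (s - \<tau> + \<sigma>))) \<le> 1"
        using True by (intro exp_neg_integral_le_1) (auto intro!: conjunct1[OF a_bounds])
      then show ?thesis
        using elim \<open>s > 0\<close> True by (simp add: indicator_def abs_mult mult_left_le)
    next
      case False
      have "exp (- integral {0..s} (\<lambda>\<sigma>. a (\<tau> - s + \<sigma>) \<sigma>)) \<le> 1"
        using False by (intro exp_neg_integral_le_1) (auto intro!: conjunct1[OF a_bounds])
      then show ?thesis
        using elim \<open>s > 0\<close> False by (simp add: indicator_def abs_mult mult_left_le)
    qed
  qed (simp add: indicator_def)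
qed

lemma n_L1_le:
  assumes "0 \<le> \<tau>"
  shows "(LINT s:{0<..}|lborel. \<bar>n \<tau> s\<bar>) \<le> B + integral {0..\<tau>} (\<lambda>u. \<bar>N u\<bar>)"
proof -
  have cont: "continuous_on {0..\<tau>} (\<lambda>u. \<bar>N u\<bar>)"
    by (intro continuous_intros continuous_on_subset[OF N_continuous]) auto
  have int1: "integrable lborel (\<lambda>s. indicator {\<tau><..} s * \<bar>m0 (s - \<tau>)\<bar>)"
    using lborel_integrable_shift_Ioi[OF abs_m0_integrable] by simp
  have int2: "integrable lborel (\<lambda>s. indicator {0..\<tau>} s * \<bar>N (\<tau> - s)\<bar>)"
    using lborel_integral_reflect_Icc(1)[OF cont] by simp
  have "(LINT s:{0<..}|lborel. \<bar>n \<tau> s\<bar>) \<le> integral\<^sup>L lborel (\<lambda>s.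
     indicator {\<tau><..} s * \<bar>m0 (s - \<tau>)\<bar> + indicator {0..\<tau>} s * \<bar>N (\<tau> - s)\<bar>)"
    unfolding set_lebesgue_integral_real
    by (rule integral_mono_AE'[OF Bochner_Integration.integrable_add[OF int1 int2] abs_n_le[OF assms]])
      auto
  also have "\<dots> = integral\<^sup>L lborel (\<lambda>s. indicator {0<..} s * \<bar>m0 s\<bar>) + integral {0..\<tau>} (\<lambda>u. \<bar>N u\<bar>)"
    using lborel_integral_shift_Ioi[of \<tau> "\<lambda>s. \<bar>m0 s\<bar>"] lborel_integral_reflect_Icc(2)[OF cont]
    by (simp add: Bochner_Integration.integral_add[OF int1 int2])
  also have "\<dots> \<le> B + integral {0..\<tau>} (\<lambda>u. \<bar>N u\<bar>)"
    using m0_L1_bound by (simp add: set_lebesgue_integral_real)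
  finally show ?thesis .
qed

lemma abs_N_le:
  assumes "0 \<le> \<tau>"
  shows "\<bar>N \<tau>\<bar> \<le> P * B + P * integral {0..\<tau>} (\<lambda>u. \<bar>N u\<bar>)"
proof -
  have "\<bar>N \<tau>\<bar> \<le> integral\<^sup>L lborel (\<lambda>s. norm (indicator {0<..} s * (a \<tau> s * n \<tau> s)))"
    using integral_norm_bound by (simp add: N_eq[OF assms] set_lebesgue_integral_real)
  also have "\<dots> \<le> integral\<^sup>L lborel (\<lambda>s. P * (indicator {0<..} s * \<bar>n \<tau> s\<bar>))"
  proof (rule integral_mono')
    show "integrable lborel (\<lambda>s. P * (indicator {0<..} s * \<bar>n \<tau> s\<bar>))"
      using integrable_abs[OF n_integrable[OF assms, unfolded set_integrable_real]]
      by (simp add: abs_mult)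
    fix s :: real
    show "norm (indicator {0<..} s * (a \<tau> s * n \<tau> s)) \<le> P * (indicator {0<..} s * \<bar>n \<tau> s\<bar>)"
      using a_bounds[OF assms, of s] by (cases "s > 0") (auto simp: abs_mult mult_right_mono)
  qed (simp add: P_nonneg)
  also have "\<dots> = P * (LINT s:{0<..}|lborel. \<bar>n \<tau> s\<bar>)"
    by (simp add: set_lebesgue_integral_real)
  also have "\<dots> \<le> P * (B + integral {0..\<tau>} (\<lambda>u. \<bar>N u\<bar>))"
    by (rule mult_left_mono[OF n_L1_le[OF assms] P_nonneg])
  finally show ?thesis by (simp add: algebra_simps)
qed

lemma abs_N_bound:
  assumes "0 \<le> \<tau>"
  shows "\<bar>N \<tau>\<bar> \<le> P * B * exp (P * \<tau>)"
proof (rule gronwall_inequality[of \<tau> "\<lambda>u. \<bar>N u\<bar>" P "P * B"])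
  show "continuous_on {0..\<tau>} (\<lambda>u. \<bar>N u\<bar>)"
    by (intro continuous_intros continuous_on_subset[OF N_continuous]) auto
qed (use assms abs_N_le P_nonneg in auto)

lemma n_L1_bound:
  assumes "0 \<le> \<tau>"
  shows "(LINT s:{0<..}|lborel. \<bar>n \<tau> s\<bar>) \<le> B + \<tau> * (P * B * exp (P * \<tau>))"
proof -
  have "integral {0..\<tau>} (\<lambda>u. \<bar>N u\<bar>) \<le> integral {0..\<tau>} (\<lambda>u. P * B * exp (P * \<tau>))"
  proof (rule integral_le)
    show "(\<lambda>u. \<bar>N u\<bar>) integrable_on {0..\<tau>}"
      by (intro integrable_continuous_real continuous_intros continuous_on_subset[OF N_continuous])
        auto
    fix u assume u: "u \<in> {0..\<tau>}"
    then have "\<bar>N u\<bar> \<le> P * B * exp (P * u)"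
      by (intro abs_N_bound) auto
    also have "\<dots> \<le> P * B * exp (P * \<tau>)"
      using u P_nonneg B_nonneg by (intro mult_left_mono) (auto intro!: mult_left_mono)
    finally show "\<bar>N u\<bar> \<le> P * B * exp (P * \<tau>)" .
  qed (rule integrable_const_ivl)
  then show ?thesis
    using n_L1_le[OF assms] assms by (simp add: algebra_simps)
qed

end

lemma renewal_char_fibre:
  fixes a :: "real \<Rightarrow> real \<Rightarrow> 'd::euclidean_space \<Rightarrow> real"
  assumes sol: "renewal_char a n0 \<Omega> n N" and x: "x \<in> \<Omega>"
    and a_bounds: "\<And>\<tau> s. 0 \<le> \<tau> \<Longrightarrow> 0 \<le> s \<Longrightarrow> 0 \<le> a \<tau> s x \<and> a \<tau> s x \<le> P"
    and n0_integrable: "set_integrable lborel {0<..} (\<lambda>s. n0 s x)"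
    and n0_L1_bound: "(LINT s:{0<..}|lborel. \<bar>n0 s x\<bar>) \<le> B"
  shows "renewal_fibre (\<lambda>\<tau> s. a \<tau> s x) (\<lambda>\<tau> s. n \<tau> s x) (\<lambda>\<tau>. N \<tau> x) (\<lambda>s. n0 s x) P B"
proof -
  have "continuous_on ({0..} \<times> \<Omega>) (\<lambda>z. N (fst z) (snd z))"
    using sol unfolding renewal_char_def by blast
  then have "continuous_on {0..} (\<lambda>\<tau>. (\<lambda>z. N (fst z) (snd z)) (\<tau>, x))"
    by (rule continuous_on_compose2) (use x in \<open>auto intro!: continuous_intros\<close>)
  then show ?thesis
    using sol x a_bounds n0_integrable n0_L1_bound
    unfolding renewal_char_def by unfold_locales auto
qed

lemma renewal_char_abs_N_bound:
  fixes a :: "real \<Rightarrow> real \<Rightarrow> 'd::euclidean_space \<Rightarrow> real"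
  assumes sol: "renewal_char a n0 \<Omega> n N" and y: "y \<in> \<Omega>" and "0 \<le> \<sigma>" "\<sigma> \<le> T"
    and a_bounds: "\<And>\<tau> s. 0 \<le> \<tau> \<Longrightarrow> 0 \<le> s \<Longrightarrow> 0 \<le> a \<tau> s y \<and> a \<tau> s y \<le> P"
    and n0_integrable: "\<And>x. x \<in> \<Omega> \<Longrightarrow> set_integrable lborel {0<..} (\<lambda>s. n0 s x)"
    and n0_L1_bound: "\<And>x. x \<in> \<Omega> \<Longrightarrow> (LINT s:{0<..}|lborel. \<bar>n0 s x\<bar>) \<le> B"
  shows "\<bar>N \<sigma> y\<bar> \<le> P * B * exp (P * T)"
proof -
  interpret renewal_fibre "\<lambda>\<tau> s. a \<tau> s y" "\<lambda>\<tau> s. n \<tau> s y" "\<lambda>\<tau>. N \<tau> y" "\<lambda>s. n0 s y" P B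
    by (rule renewal_char_fibre[OF sol y a_bounds n0_integrable[OF y] n0_L1_bound[OF y]])
  have "\<bar>N \<sigma> y\<bar> \<le> P * B * exp (P * \<sigma>)"
    by (rule abs_N_bound) fact
  also have "\<dots> \<le> P * B * exp (P * T)"
    using P_nonneg B_nonneg \<open>\<sigma> \<le> T\<close> by (intro mult_left_mono) (auto intro: mult_left_mono)
  finally show ?thesis .
qed

lemma renewal_fibres_L1_dist_bound:
  assumes "renewal_fibre a n N m0 P B" "renewal_fibre a' n' N' m0 P B" "0 \<le> t"
  shows "(LINT s:{0<..}|lborel. \<bar>n t s - n' t s\<bar>) \<le> 2 * (B + t * (P * B * exp (P * t)))"
proof -
  interpret n: renewal_fibre a n N m0 P B by fact
  interpret n': renewal_fibre a' n' N' m0 P B by fact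
  have int: "integrable lborel (\<lambda>s. indicator {0<..} s * \<bar>n t s\<bar>)"
    "integrable lborel (\<lambda>s. indicator {0<..} s * \<bar>n' t s\<bar>)"
    using integrable_abs[OF n.n_integrable[OF \<open>0 \<le> t\<close>, unfolded set_integrable_real]]
      integrable_abs[OF n'.n_integrable[OF \<open>0 \<le> t\<close>, unfolded set_integrable_real]]
    by (simp_all add: abs_mult)
  have "(LINT s:{0<..}|lborel. \<bar>n t s - n' t s\<bar>) \<le>
      integral\<^sup>L lborel (\<lambda>s. indicator {0<..} s * \<bar>n t s\<bar> + indicator {0<..} s * \<bar>n' t s\<bar>)"
    unfolding set_lebesgue_integral_real
    by (rule integral_mono'[OF Bochner_Integration.integrable_add[OF int]])
      (auto simp: indicator_def abs_triangle_ineq4)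
  also have "\<dots> = (LINT s:{0<..}|lborel. \<bar>n t s\<bar>) + (LINT s:{0<..}|lborel. \<bar>n' t s\<bar>)"
    unfolding set_lebesgue_integral_real by (rule Bochner_Integration.integral_add[OF int])
  also have "\<dots> \<le> 2 * (B + t * (P * B * exp (P * t)))"
    using n.n_L1_bound[OF \<open>0 \<le> t\<close>] n'.n_L1_bound[OF \<open>0 \<le> t\<close>] by simp
  finally show ?thesis .
qed

section \<open>Rates with a limit at infinite signal\<close>

locale rate_limit =
  fixes p :: "real \<Rightarrow> real \<Rightarrow> real" and pinf :: "real \<Rightarrow> real" and P :: real
  assumes p_continuous: "continuous_on ({0..} \<times> UNIV) (\<lambda>z. p (fst z) (snd z))"
    and p_bounds: "\<And>s S. 0 \<le> s \<Longrightarrow> 0 \<le> p s S \<and> p s S \<le> P"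
    and p_tendsto_pinf: "\<And>s. 0 \<le> s \<Longrightarrow> ((\<lambda>S. p s S) \<longlongrightarrow> pinf s) at_top"
begin

lemma pinf_bounds: "0 \<le> s \<Longrightarrow> 0 \<le> pinf s \<and> pinf s \<le> P"
  using p_tendsto_pinf[of s] p_bounds[of s]
  by (auto intro: tendsto_lowerbound tendsto_upperbound simp: eventually_at_top_linorder)

lemma tendsto_p_pinf:
  assumes "0 \<le> s" "filterlim q at_top F"
  shows "((\<lambda>k. p s (q k)) \<longlongrightarrow> pinf s) F"
  using filterlim_compose[OF p_tendsto_pinf[OF assms(1)] assms(2)] by simp

text \<open>Only ages \<open>s \<ge> 0\<close> are constrained; precomposing with \<open>max 0\<close> gives globally defined,
  hence Borel, versions of the rates.\<close>

lemma continuous_on_p_max_0: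
  assumes "continuous_on A g" "continuous_on A h"
  shows "continuous_on A (\<lambda>x. p (max 0 (g x)) (h x))"
proof -
  have "continuous_on A (\<lambda>x. (\<lambda>z. p (fst z) (snd z)) (max 0 (g x), h x))"
    by (rule continuous_on_compose2[OF p_continuous]) (auto intro!: continuous_intros assms)
  then show ?thesis by simp
qed

lemma borel_measurable_p_max_0: "(\<lambda>s. p (max 0 s) c) \<in> borel_measurable borel"
  by (intro borel_measurable_continuous_onI continuous_on_p_max_0 continuous_intros)

lemma borel_measurable_pinf_max_0: "(\<lambda>s. pinf (max 0 s)) \<in> borel_measurable borel"
proof (rule borel_measurable_LIMSEQ_real)
  show "(\<lambda>i. p (max 0 s) (real i)) \<longlonglongrightarrow> pinf (max 0 s)" for s
    by (intro tendsto_p_pinf filterlim_real_sequentially) simp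
qed (rule borel_measurable_p_max_0)

lemma integral_p_tendsto_pinf:
  fixes g :: "real \<Rightarrow> real" and q :: "nat \<Rightarrow> real \<Rightarrow> real"
  assumes g: "continuous_on {0..T} g" "\<And>\<sigma>. \<sigma> \<in> {0..T} \<Longrightarrow> 0 \<le> g \<sigma>"
    and q: "\<And>k. continuous_on {0..T} (q k)"
    and q_tendsto: "\<And>\<sigma>. \<sigma> \<in> {0..T} \<Longrightarrow> filterlim (\<lambda>k. q k \<sigma>) at_top sequentially"
  shows "(\<lambda>k. integral {0..T} (\<lambda>\<sigma>. p (g \<sigma>) (q k \<sigma>))) \<longlonglongrightarrow> integral {0..T} (\<lambda>\<sigma>. pinf (g \<sigma>))"
proof -
  have max_g: "max 0 (g \<sigma>) = g \<sigma>" if "\<sigma> \<in> {0..T}" for \<sigma>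
    using g(2)[OF that] by simp
  have "(\<lambda>k. integral {0..T} (\<lambda>\<sigma>. p (max 0 (g \<sigma>)) (q k \<sigma>))) \<longlonglongrightarrow>
      integral {0..T} (\<lambda>\<sigma>. pinf (max 0 (g \<sigma>)))"
  proof (rule dominated_convergence(2)[where h="\<lambda>_. P"])
    show "(\<lambda>\<sigma>. p (max 0 (g \<sigma>)) (q k \<sigma>)) integrable_on {0..T}" for k
      by (intro integrable_continuous_real continuous_on_p_max_0 g q)
    show "norm (p (max 0 (g \<sigma>)) (q k \<sigma>)) \<le> P" if "\<sigma> \<in> {0..T}" for k \<sigma>
      using p_bounds[of "max 0 (g \<sigma>)" "q k \<sigma>"] by auto
    show "(\<lambda>k. p (max 0 (g \<sigma>)) (q k \<sigma>)) \<longlonglongrightarrow> pinf (max 0 (g \<sigma>))" if "\<sigma> \<in> {0..T}" for \<sigma>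
      by (rule tendsto_p_pinf[OF _ q_tendsto[OF that]]) simp
  qed (rule integrable_const_ivl)
  moreover have "integral {0..T} (\<lambda>\<sigma>. p (max 0 (g \<sigma>)) (q k \<sigma>)) =
      integral {0..T} (\<lambda>\<sigma>. p (g \<sigma>) (q k \<sigma>))" for k
    by (intro integral_cong) (simp add: max_g)
  moreover have "integral {0..T} (\<lambda>\<sigma>. pinf (max 0 (g \<sigma>))) = integral {0..T} (\<lambda>\<sigma>. pinf (g \<sigma>))"
    by (intro integral_cong) (simp add: max_g)
  ultimately show ?thesis
    by simp
qed

end

lemma rate_limitI:
  assumes lipschitz: "\<exists>L. \<forall>s1\<ge>0. \<forall>s2\<ge>0. \<forall>S1 S2. \<bar>p s1 S1 - p s2 S2\<bar> \<le> L * dist (s1, S1) (s2, S2)"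
    and bounds: "\<And>s S. 0 \<le> s \<Longrightarrow> 0 \<le> p s S \<and> p s S \<le> P"
    and limit: "\<forall>s\<ge>0. ((\<lambda>S. p s S) \<longlongrightarrow> pinf s) at_top"
  shows "rate_limit p pinf P"
proof
  obtain L where L: "\<And>s1 s2 S1 S2. 0 \<le> s1 \<Longrightarrow> 0 \<le> s2 \<Longrightarrow>
      \<bar>p s1 S1 - p s2 S2\<bar> \<le> L * dist (s1, S1) (s2, S2)"
    using lipschitz by blast
  have "L-lipschitz_on ({0..} \<times> UNIV) (\<lambda>z. p (fst z) (snd z))"
  proof (rule lipschitz_onI)
    show "dist (p (fst z) (snd z)) (p (fst z') (snd z')) \<le> L * dist z z'"
      if "z \<in> {0..} \<times> UNIV" "z' \<in> {0..} \<times> UNIV" for z z'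
      using that L[of "fst z" "fst z'" "snd z" "snd z'"] by (force simp: dist_real_def mem_Times_iff)
    show "0 \<le> L"
      using L[of 0 0 0 1] abs_ge_zero[of "p 0 0 - p 0 1"] by (simp add: dist_Pair_Pair)
  qed
  then show "continuous_on ({0..} \<times> UNIV) (\<lambda>z. p (fst z) (snd z))"
    by (rule lipschitz_on_continuous_on)
qed (use bounds limit in auto)

section \<open>Convergence along one fibre\<close>

locale fibre_convergence = rate_limit p pinf P for p pinf P +
  fixes S :: "nat \<Rightarrow> real \<Rightarrow> real"
    and n :: "nat \<Rightarrow> real \<Rightarrow> real \<Rightarrow> real" and N :: "nat \<Rightarrow> real \<Rightarrow> real"
    and ni :: "real \<Rightarrow> real \<Rightarrow> real" and Ni :: "real \<Rightarrow> real"
    and m0 :: "real \<Rightarrow> real" and B :: real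
  assumes renewal_k: "\<And>k. renewal_fibre (\<lambda>\<tau> s. p s (S k \<tau>)) (n k) (N k) m0 P B"
    and renewal_inf: "renewal_fibre (\<lambda>\<tau> s. pinf s) ni Ni m0 P B"
    and S_continuous: "\<And>k. continuous_on {0..} (S k)"
    and S_tendsto: "\<And>\<sigma>. 0 \<le> \<sigma> \<Longrightarrow> filterlim (\<lambda>k. S k \<sigma>) at_top sequentially"
begin

sublocale limit: renewal_fibre "\<lambda>\<tau> s. pinf s" ni Ni m0 P B
  by (rule renewal_inf)

definition N_max :: "real \<Rightarrow> real" where
  "N_max \<tau> = P * B * exp (P * \<tau>)"

lemma N_max_nonneg: "0 \<le> N_max \<tau>"
  unfolding N_max_def using limit.P_nonneg limit.B_nonneg by simp

lemma N_max_mono: "u \<le> \<tau> \<Longrightarrow> N_max u \<le> N_max \<tau>"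
  unfolding N_max_def using limit.P_nonneg limit.B_nonneg
  by (intro mult_left_mono) (auto intro: mult_left_mono)

lemma abs_N_le_N_max: "0 \<le> \<tau> \<Longrightarrow> \<bar>N k \<tau>\<bar> \<le> N_max \<tau>"
  unfolding N_max_def by (rule renewal_fibre.abs_N_bound[OF renewal_k])

lemma abs_Ni_le_N_max: "0 \<le> \<tau> \<Longrightarrow> \<bar>Ni \<tau>\<bar> \<le> N_max \<tau>"
  unfolding N_max_def by (rule limit.abs_N_bound)

text \<open>The survival factor along the characteristic through \<open>(\<tau>, s)\<close>, followed back for the
  time \<open>min \<tau> s\<close> to the initial datum (\<open>\<tau> < s\<close>) or to the birth boundary (\<open>s \<le> \<tau>\<close>).\<close>

definition survival :: "nat \<Rightarrow> real \<Rightarrow> real \<Rightarrow> real" where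
  "survival k \<tau> s =
     exp (- integral {0..min \<tau> s} (\<lambda>\<sigma>. p (s - min \<tau> s + \<sigma>) (S k (\<tau> - min \<tau> s + \<sigma>))))"

definition survival_inf :: "real \<Rightarrow> real \<Rightarrow> real" where
  "survival_inf \<tau> s = exp (- integral {0..min \<tau> s} (\<lambda>\<sigma>. pinf (s - min \<tau> s + \<sigma>)))"

lemma survival_le_1: "0 \<le> s \<Longrightarrow> survival k \<tau> s \<le> 1"
  unfolding survival_def by (intro exp_neg_integral_le_1) (auto intro!: conjunct1[OF p_bounds])

lemma survival_inf_le_1: "0 \<le> s \<Longrightarrow> survival_inf \<tau> s \<le> 1"
  unfolding survival_inf_def by (intro exp_neg_integral_le_1) (auto intro!: conjunct1[OF pinf_bounds])

lemma survival_tendsto: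
  assumes "0 \<le> \<tau>" "0 \<le> s"
  shows "(\<lambda>k. survival k \<tau> s) \<longlonglongrightarrow> survival_inf \<tau> s"
  unfolding survival_def survival_inf_def
proof (intro tendsto_intros integral_p_tendsto_pinf)
  show "continuous_on {0..min \<tau> s} (\<lambda>\<sigma>. s - min \<tau> s + \<sigma>)"
    by (intro continuous_intros)
  show "continuous_on {0..min \<tau> s} (\<lambda>\<sigma>. S k (\<tau> - min \<tau> s + \<sigma>))" for k
    by (intro continuous_on_compose2[OF S_continuous[of k]] continuous_intros) auto
  show "filterlim (\<lambda>k. S k (\<tau> - min \<tau> s + \<sigma>)) at_top sequentially" if "\<sigma> \<in> {0..min \<tau> s}" for \<sigma>
    using that by (intro S_tendsto) auto
qed (use assms in auto)

lemma AE_n_eq: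
  assumes "0 \<le> \<tau>"
  shows "AE s in lborel. 0 < s \<longrightarrow>
    (\<forall>k. n k \<tau> s = (if \<tau> < s then m0 (s - \<tau>) else N k (\<tau> - s)) * survival k \<tau> s) \<and>
    ni \<tau> s = (if \<tau> < s then m0 (s - \<tau>) else Ni (\<tau> - s)) * survival_inf \<tau> s"
proof -
  have "AE s in lborel. 0 < s \<longrightarrow>
      n k \<tau> s = (if \<tau> < s then m0 (s - \<tau>) else N k (\<tau> - s)) * survival k \<tau> s" for k
    using renewal_fibre.n_formula[OF renewal_k[of k] assms]
    by eventually_elim (simp add: survival_def min_def)
  then have "AE s in lborel. \<forall>k. 0 < s \<longrightarrow>
      n k \<tau> s = (if \<tau> < s then m0 (s - \<tau>) else N k (\<tau> - s)) * survival k \<tau> s"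
    by (simp only: AE_all_countable) blast
  moreover have "AE s in lborel. 0 < s \<longrightarrow>
      ni \<tau> s = (if \<tau> < s then m0 (s - \<tau>) else Ni (\<tau> - s)) * survival_inf \<tau> s"
    using limit.n_formula[OF assms] by eventually_elim (simp add: survival_inf_def min_def)
  ultimately show ?thesis
    by eventually_elim blast
qed

definition envelope :: "real \<Rightarrow> real \<Rightarrow> real" where
  "envelope \<tau> s = indicator {\<tau><..} s * \<bar>m0 (s - \<tau>)\<bar> + indicator {0..\<tau>} s * N_max \<tau>"

lemma envelope_nonneg: "0 \<le> envelope \<tau> s"
  unfolding envelope_def using N_max_nonneg by simp

lemma envelope_integrable: "integrable lborel (envelope \<tau>)"
proof -
  have "integrable lborel (\<lambda>s. indicator {\<tau><..} s * \<bar>m0 (s - \<tau>)\<bar> + indicator {0..\<tau>} s *\<^sub>R N_max \<tau>)"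
    by (intro Bochner_Integration.integrable_add lborel_integrable_shift_Ioi
        limit.abs_m0_integrable borel_integrable_compact) auto
  then show ?thesis
    by (simp add: envelope_def[abs_def])
qed

lemma abs_n_le_envelope:
  assumes "0 \<le> \<tau>"
  shows "AE s in lborel. 0 < s \<longrightarrow> (\<forall>k. \<bar>n k \<tau> s\<bar> \<le> envelope \<tau> s) \<and> \<bar>ni \<tau> s\<bar> \<le> envelope \<tau> s"
  using AE_n_eq[OF assms]
proof eventually_elim
  case (elim s)
  show ?case
  proof (intro impI conjI allI)
    assume s: "0 < s"
    have survival: "\<bar>survival k \<tau> s\<bar> \<le> 1" "\<bar>survival_inf \<tau> s\<bar> \<le> 1" for k
      using s survival_le_1[of s k \<tau>] survival_inf_le_1[of s \<tau>]
      by (auto simp: survival_def survival_inf_def)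
    have "\<bar>N k (\<tau> - s)\<bar> \<le> envelope \<tau> s" "\<bar>Ni (\<tau> - s)\<bar> \<le> envelope \<tau> s" if "s \<le> \<tau>" for k
      using that s abs_N_le_N_max[of "\<tau> - s" k] abs_Ni_le_N_max[of "\<tau> - s"] N_max_mono[of "\<tau> - s" \<tau>]
      by (auto simp: envelope_def)
    moreover have "\<bar>m0 (s - \<tau>)\<bar> \<le> envelope \<tau> s" if "\<tau> < s"
      using that by (simp add: envelope_def)
    ultimately show "\<bar>n k \<tau> s\<bar> \<le> envelope \<tau> s" "\<bar>ni \<tau> s\<bar> \<le> envelope \<tau> s" for k
      using elim s survival envelope_nonneg[of \<tau> s]
      by (auto simp: abs_mult intro: mult_le_one order.trans[OF mult_right_le_one_le])
  qed
qed


lemma n_measurable: "0 \<le> \<tau> \<Longrightarrow> (\<lambda>s. indicator {0<..} s * n k \<tau> s) \<in> borel_measurable borel"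
  using borel_measurable_integrable[OF renewal_fibre.n_integrable[OF renewal_k, unfolded set_integrable_real]]
  by simp

lemma ni_measurable: "0 \<le> \<tau> \<Longrightarrow> (\<lambda>s. indicator {0<..} s * ni \<tau> s) \<in> borel_measurable borel"
  using borel_measurable_integrable[OF limit.n_integrable[unfolded set_integrable_real]] by simp

definition flux :: "nat \<Rightarrow> real \<Rightarrow> real \<Rightarrow> real" where
  "flux k \<tau> s = p s (S k \<tau>) * n k \<tau> s"

definition flux_inf :: "real \<Rightarrow> real \<Rightarrow> real" where
  "flux_inf \<tau> s = pinf s * ni \<tau> s"

lemma flux_measurable:
  assumes "0 \<le> \<tau>"
  shows "(\<lambda>s. indicator {0<..} s * flux k \<tau> s) \<in> borel_measurable borel"
proof -
  have "(\<lambda>s. p (max 0 s) (S k \<tau>) * (indicator {0<..} s * n k \<tau> s)) \<in> borel_measurable borel"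
    using n_measurable[OF assms] borel_measurable_p_max_0 by measurable
  moreover have "(\<lambda>s. p (max 0 s) (S k \<tau>) * (indicator {0<..} s * n k \<tau> s)) =
      (\<lambda>s. indicator {0<..} s * flux k \<tau> s)"
    by (auto simp: fun_eq_iff indicator_def flux_def)
  ultimately show ?thesis by simp
qed

lemma flux_inf_measurable:
  assumes "0 \<le> \<tau>"
  shows "(\<lambda>s. indicator {0<..} s * flux_inf \<tau> s) \<in> borel_measurable borel"
proof -
  have "(\<lambda>s. pinf (max 0 s) * (indicator {0<..} s * ni \<tau> s)) \<in> borel_measurable borel"
    using ni_measurable[OF assms] borel_measurable_pinf_max_0 by measurable
  moreover have "(\<lambda>s. pinf (max 0 s) * (indicator {0<..} s * ni \<tau> s)) =
      (\<lambda>s. indicator {0<..} s * flux_inf \<tau> s)"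
    by (auto simp: fun_eq_iff indicator_def flux_inf_def)
  ultimately show ?thesis by simp
qed

lemma flux_integrable:
  assumes "0 \<le> \<tau>"
  shows "integrable lborel (\<lambda>s. indicator {0<..} s * flux k \<tau> s)"
proof (rule Bochner_Integration.integrable_bound)
  show "integrable lborel (\<lambda>s. P * (indicator {0<..} s * n k \<tau> s))"
    using renewal_fibre.n_integrable[OF renewal_k assms, unfolded set_integrable_real] by simp
  show "AE s in lborel. norm (indicator {0<..} s * flux k \<tau> s) \<le> norm (P * (indicator {0<..} s * n k \<tau> s))"
    using p_bounds limit.P_nonneg
    by (intro AE_I2) (auto simp: flux_def indicator_def abs_mult mult_right_mono)
qed (use flux_measurable[OF assms] in simp)

lemma flux_inf_integrable:
  assumes "0 \<le> \<tau>"
  shows "integrable lborel (\<lambda>s. indicator {0<..} s * flux_inf \<tau> s)"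
proof (rule Bochner_Integration.integrable_bound)
  show "integrable lborel (\<lambda>s. P * (indicator {0<..} s * ni \<tau> s))"
    using limit.n_integrable[OF assms, unfolded set_integrable_real] by simp
  show "AE s in lborel. norm (indicator {0<..} s * flux_inf \<tau> s) \<le> norm (P * (indicator {0<..} s * ni \<tau> s))"
    using pinf_bounds limit.P_nonneg
    by (intro AE_I2) (auto simp: flux_inf_def indicator_def abs_mult mult_right_mono)
qed (use flux_inf_measurable[OF assms] in simp)

definition Ndist :: "nat \<Rightarrow> real \<Rightarrow> real" where
  "Ndist k u = \<bar>N k u - Ni u\<bar>"

lemma Ndist_continuous: "continuous_on {0..} (Ndist k)"
  unfolding Ndist_def
  by (intro continuous_intros renewal_fibre.N_continuous[OF renewal_k] limit.N_continuous)

text \<open>The part of the flux difference at age \<open>s\<close> that is not already controlled by the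
  difference of the birth rates at the birth time \<open>\<tau> - s\<close>; the rest is handled by Gronwall.\<close>

definition flux_excess :: "nat \<Rightarrow> real \<Rightarrow> real \<Rightarrow> real" where
  "flux_excess k \<tau> s = indicator {0<..} s *
     max 0 (\<bar>flux k \<tau> s - flux_inf \<tau> s\<bar> - P * (indicator {0..\<tau>} s * Ndist k (\<tau> - s)))"

lemma flux_excess_measurable:
  assumes "0 \<le> \<tau>"
  shows "flux_excess k \<tau> \<in> borel_measurable borel"
proof -
  have measurable: "(\<lambda>s. indicator {0<..} s * max 0 (\<bar>F s - F' s\<bar> - P * (indicator {0..\<tau>} s * D s)))
      \<in> borel_measurable borel"
    if "F \<in> borel_measurable borel" "F' \<in> borel_measurable borel" "D \<in> borel_measurable borel"
    for F F' D :: "real \<Rightarrow> real"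
    using that by measurable
  have "continuous_on UNIV (\<lambda>s. Ndist k (max 0 (\<tau> - s)))"
    by (intro continuous_on_compose2[OF Ndist_continuous] continuous_intros) auto
  then have "(\<lambda>s. indicator {0<..} s * max 0 (\<bar>indicator {0<..} s * flux k \<tau> s - indicator {0<..} s * flux_inf \<tau> s\<bar>
      - P * (indicator {0..\<tau>} s * Ndist k (max 0 (\<tau> - s))))) \<in> borel_measurable borel"
    by (intro measurable flux_measurable[OF assms] flux_inf_measurable[OF assms]
        borel_measurable_continuous_onI)
  moreover have "(\<lambda>s. indicator {0<..} s * max 0 (\<bar>indicator {0<..} s * flux k \<tau> s - indicator {0<..} s * flux_inf \<tau> s\<bar>
      - P * (indicator {0..\<tau>} s * Ndist k (max 0 (\<tau> - s))))) = flux_excess k \<tau>"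
  proof
    fix s
    show "indicator {0<..} s * max 0 (\<bar>indicator {0<..} s * flux k \<tau> s - indicator {0<..} s * flux_inf \<tau> s\<bar>
        - P * (indicator {0..\<tau>} s * Ndist k (max 0 (\<tau> - s)))) = flux_excess k \<tau> s"
      by (cases "0 < s"; cases "s \<le> \<tau>") (simp_all add: flux_excess_def indicator_def max_absorb2)
  qed
  ultimately show ?thesis by simp
qed

lemma flux_excess_bound:
  assumes "0 \<le> \<tau>"
  shows "AE s in lborel. norm (flux_excess k \<tau> s) \<le> 2 * P * envelope \<tau> s"
  using abs_n_le_envelope[OF assms]
proof eventually_elim
  case (elim s)
  show ?case
  proof (cases "0 < s")
    case True
    have "\<bar>flux k \<tau> s\<bar> \<le> P * envelope \<tau> s"
      unfolding flux_def abs_mult using p_bounds[of s "S k \<tau>"] elim True by (intro mult_mono) auto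
    moreover have "\<bar>flux_inf \<tau> s\<bar> \<le> P * envelope \<tau> s"
      unfolding flux_inf_def abs_mult using pinf_bounds[of s] elim True by (intro mult_mono) auto
    moreover have "\<bar>flux k \<tau> s - flux_inf \<tau> s\<bar> \<le> \<bar>flux k \<tau> s\<bar> + \<bar>flux_inf \<tau> s\<bar>"
      by (rule abs_triangle_ineq4)
    ultimately have "\<bar>flux k \<tau> s - flux_inf \<tau> s\<bar> \<le> 2 * P * envelope \<tau> s"
      by linarith
    moreover have "0 \<le> P * (indicator {0..\<tau>} s * Ndist k (\<tau> - s))"
      using limit.P_nonneg by (simp add: Ndist_def)
    ultimately show ?thesis
      using True unfolding flux_excess_def by (simp only: indicator_simps norm_mult) simp
  qed (simp add: flux_excess_def limit.P_nonneg envelope_nonneg)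
qed

lemma flux_tendsto_initial:
  assumes "0 \<le> \<tau>"
  shows "AE s in lborel. \<tau> < s \<longrightarrow> (\<lambda>k. flux k \<tau> s) \<longlonglongrightarrow> flux_inf \<tau> s"
  using AE_n_eq[OF assms]
proof eventually_elim
  case (elim s)
  show ?case
  proof
    assume s: "\<tau> < s"
    have "(\<lambda>k. p s (S k \<tau>) * (m0 (s - \<tau>) * survival k \<tau> s)) \<longlonglongrightarrow>
        pinf s * (m0 (s - \<tau>) * survival_inf \<tau> s)"
      using s assms by (intro tendsto_intros tendsto_p_pinf S_tendsto survival_tendsto) auto
    then show "(\<lambda>k. flux k \<tau> s) \<longlonglongrightarrow> flux_inf \<tau> s"
      using elim s assms by (simp add: flux_def flux_inf_def)
  qed
qed

lemma flux_excess_tendsto_born: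
  assumes "0 \<le> \<tau>"
  shows "AE s in lborel. 0 < s \<and> s \<le> \<tau> \<longrightarrow>
    (\<lambda>k. max 0 (\<bar>flux k \<tau> s - flux_inf \<tau> s\<bar> - P * Ndist k (\<tau> - s))) \<longlonglongrightarrow> 0"
  using AE_n_eq[OF assms]
proof eventually_elim
  case (elim s)
  show ?case
  proof
    assume s: "0 < s \<and> s \<le> \<tau>"
    define b where "b k = p s (S k \<tau>) * survival k \<tau> s" for k
    define b_inf where "b_inf = pinf s * survival_inf \<tau> s"
    have flux: "flux k \<tau> s = b k * N k (\<tau> - s)" "flux_inf \<tau> s = b_inf * Ni (\<tau> - s)" for k
      using elim s by (auto simp: flux_def flux_inf_def b_def b_inf_def)
    have b_bound: "\<bar>b k\<bar> \<le> P" for k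
    proof -
      have "\<bar>p s (S k \<tau>)\<bar> * \<bar>survival k \<tau> s\<bar> \<le> P * 1"
        using p_bounds[of s "S k \<tau>"] survival_le_1[of s k \<tau>] s limit.P_nonneg
        by (intro mult_mono) (auto simp: survival_def)
      then show ?thesis by (simp add: b_def abs_mult)
    qed
    have "b \<longlonglongrightarrow> b_inf"
      unfolding b_def b_inf_def using s by (intro tendsto_intros tendsto_p_pinf S_tendsto survival_tendsto) auto
    then have "(\<lambda>k. \<bar>b k - b_inf\<bar> * \<bar>Ni (\<tau> - s)\<bar>) \<longlonglongrightarrow> \<bar>b_inf - b_inf\<bar> * \<bar>Ni (\<tau> - s)\<bar>"
      by (intro tendsto_intros)
    then have lim: "(\<lambda>k. \<bar>b k - b_inf\<bar> * \<bar>Ni (\<tau> - s)\<bar>) \<longlonglongrightarrow> 0"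
      by simp
    have le: "max 0 (\<bar>flux k \<tau> s - flux_inf \<tau> s\<bar> - P * Ndist k (\<tau> - s)) \<le> \<bar>b k - b_inf\<bar> * \<bar>Ni (\<tau> - s)\<bar>"
      for k
    proof -
      have "flux k \<tau> s - flux_inf \<tau> s = (b k - b_inf) * Ni (\<tau> - s) + b k * (N k (\<tau> - s) - Ni (\<tau> - s))"
        by (simp add: flux algebra_simps)
      then have "\<bar>flux k \<tau> s - flux_inf \<tau> s\<bar> \<le> \<bar>b k - b_inf\<bar> * \<bar>Ni (\<tau> - s)\<bar> + \<bar>b k\<bar> * Ndist k (\<tau> - s)"
        by (simp add: Ndist_def abs_mult[symmetric] abs_triangle_ineq)
      moreover have "\<bar>b k\<bar> * Ndist k (\<tau> - s) \<le> P * Ndist k (\<tau> - s)"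
        using b_bound[of k] by (intro mult_right_mono) (auto simp: Ndist_def)
      ultimately show ?thesis by auto
    qed
    show "(\<lambda>k. max 0 (\<bar>flux k \<tau> s - flux_inf \<tau> s\<bar> - P * Ndist k (\<tau> - s))) \<longlonglongrightarrow> 0"
      by (rule tendsto_sandwich[OF always_eventually always_eventually tendsto_const lim])
        (simp, intro allI le)
  qed
qed

lemma flux_excess_tendsto:
  assumes "0 \<le> \<tau>"
  shows "AE s in lborel. (\<lambda>k. flux_excess k \<tau> s) \<longlonglongrightarrow> 0"
  using flux_tendsto_initial[OF assms] flux_excess_tendsto_born[OF assms]
proof eventually_elim
  case (elim s)
  consider "s \<le> 0" | "\<tau> < s" | "0 < s \<and> s \<le> \<tau>"
    by linarith
  then show ?case
  proof cases
    case 1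
    then show ?thesis
      by (simp add: flux_excess_def)
  next
    case 2
    then have "(\<lambda>k. \<bar>flux k \<tau> s - flux_inf \<tau> s\<bar>) \<longlonglongrightarrow> 0"
      using elim by (intro tendsto_rabs_zero LIM_zero) auto
    then show ?thesis
      using 2 assms by (simp add: flux_excess_def)
  next
    case 3
    then have "flux_excess k \<tau> s = max 0 (\<bar>flux k \<tau> s - flux_inf \<tau> s\<bar> - P * Ndist k (\<tau> - s))" for k
      by (simp add: flux_excess_def)
    then show ?thesis
      using elim 3 by simp
  qed
qed

lemma integral_flux_excess_tendsto:
  assumes "0 \<le> \<tau>"
  shows "(\<lambda>k. integral\<^sup>L lborel (flux_excess k \<tau>)) \<longlonglongrightarrow> 0"
    and "\<And>k. integrable lborel (flux_excess k \<tau>)"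
proof -
  have "integrable lborel (\<lambda>s. 2 * P * envelope \<tau> s)"
    using envelope_integrable by simp
  note dominated = lborel_dominated_convergence_zero[OF flux_excess_measurable[OF assms] this
      flux_excess_tendsto[OF assms] flux_excess_bound[OF assms]]
  show "(\<lambda>k. integral\<^sup>L lborel (flux_excess k \<tau>)) \<longlonglongrightarrow> 0"
    by (rule dominated(1))
  show "integrable lborel (flux_excess k \<tau>)" for k
    by (rule dominated(2))
qed

lemma Ndist_le:
  assumes "0 \<le> \<tau>"
  shows "Ndist k \<tau> \<le> integral\<^sup>L lborel (flux_excess k \<tau>) + P * integral {0..\<tau>} (Ndist k)"
proof -
  have cont: "continuous_on {0..\<tau>} (Ndist k)"
    by (rule continuous_on_subset[OF Ndist_continuous]) auto
  have int: "integrable lborel (\<lambda>s. P * (indicator {0..\<tau>} s * Ndist k (\<tau> - s)))"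
    using lborel_integral_reflect_Icc(1)[OF cont] by simp
  have "N k \<tau> - Ni \<tau> =
      integral\<^sup>L lborel (\<lambda>s. indicator {0<..} s * flux k \<tau> s - indicator {0<..} s * flux_inf \<tau> s)"
    using renewal_fibre.N_eq[OF renewal_k assms] limit.N_eq[OF assms]
      flux_integrable[OF assms] flux_inf_integrable[OF assms]
    by (simp add: set_lebesgue_integral_real flux_def flux_inf_def)
  then have "Ndist k \<tau> \<le>
      integral\<^sup>L lborel (\<lambda>s. norm (indicator {0<..} s * flux k \<tau> s - indicator {0<..} s * flux_inf \<tau> s))"
    unfolding Ndist_def by (metis integral_norm_bound real_norm_def)
  also have "\<dots> \<le> integral\<^sup>L lborel (\<lambda>s. flux_excess k \<tau> s + P * (indicator {0..\<tau>} s * Ndist k (\<tau> - s)))"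
  proof (rule integral_mono')
    show "integrable lborel (\<lambda>s. flux_excess k \<tau> s + P * (indicator {0..\<tau>} s * Ndist k (\<tau> - s)))"
      by (intro Bochner_Integration.integrable_add integral_flux_excess_tendsto(2)[OF assms] int)
    fix s :: real
    have "0 \<le> P * (indicator {0..\<tau>} s * Ndist k (\<tau> - s))"
      using limit.P_nonneg by (simp add: Ndist_def)
    moreover have "0 \<le> flux_excess k \<tau> s"
      by (simp add: flux_excess_def)
    ultimately show "0 \<le> flux_excess k \<tau> s + P * (indicator {0..\<tau>} s * Ndist k (\<tau> - s))"
      "norm (indicator {0<..} s * flux k \<tau> s - indicator {0<..} s * flux_inf \<tau> s) \<le>
        flux_excess k \<tau> s + P * (indicator {0..\<tau>} s * Ndist k (\<tau> - s))"
      by (auto simp: flux_excess_def indicator_def)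
  qed
  also have "\<dots> = integral\<^sup>L lborel (flux_excess k \<tau>) + P * integral {0..\<tau>} (Ndist k)"
    using lborel_integral_reflect_Icc(2)[OF cont]
    by (simp add: Bochner_Integration.integral_add[OF integral_flux_excess_tendsto(2)[OF assms] int])
  finally show ?thesis .
qed

lemma N_tendsto:
  assumes "0 \<le> t"
  shows "(\<lambda>k. N k t) \<longlonglongrightarrow> Ni t"
proof -
  have "(\<lambda>k. Ndist k t) \<longlonglongrightarrow> 0"
  proof (rule gronwall_tendsto_zero[OF assms limit.P_nonneg, where M = "2 * N_max t"
        and E = "\<lambda>k u. integral\<^sup>L lborel (flux_excess k u)"])
    show "continuous_on {0..t} (Ndist k)" for k
      by (rule continuous_on_subset[OF Ndist_continuous]) auto
    show "Ndist k u \<le> 2 * N_max t" if "u \<in> {0..t}" for k u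
      using that abs_N_le_N_max[of u k] abs_Ni_le_N_max[of u] N_max_mono[of u t]
      by (auto simp: Ndist_def)
    show "0 \<le> Ndist k u" for k u
      by (simp add: Ndist_def)
    show "Ndist k u \<le> integral\<^sup>L lborel (flux_excess k u) + P * integral {0..u} (Ndist k)"
      if "u \<in> {0..t}" for k u
      using that by (intro Ndist_le) auto
    show "(\<lambda>k. integral\<^sup>L lborel (flux_excess k u)) \<longlonglongrightarrow> 0" if "u \<in> {0..t}" for u
      using that by (intro integral_flux_excess_tendsto(1)) auto
  qed
  then have "(\<lambda>k. N k t - Ni t) \<longlonglongrightarrow> 0"
    unfolding Ndist_def by (rule tendsto_rabs_zero_cancel)
  then show ?thesis
    by (rule LIM_zero_cancel)
qed

lemma n_tendsto:
  assumes "0 \<le> t"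
  shows "AE s in lborel. 0 < s \<longrightarrow> (\<lambda>k. n k t s) \<longlonglongrightarrow> ni t s"
  using AE_n_eq[OF assms]
proof eventually_elim
  case (elim s)
  show ?case
  proof
    assume s: "0 < s"
    have "(\<lambda>k. if t < s then m0 (s - t) else N k (t - s)) \<longlonglongrightarrow> (if t < s then m0 (s - t) else Ni (t - s))"
      by (cases "t < s") (auto intro: N_tendsto)
    then have "(\<lambda>k. (if t < s then m0 (s - t) else N k (t - s)) * survival k t s) \<longlonglongrightarrow>
        (if t < s then m0 (s - t) else Ni (t - s)) * survival_inf t s"
      using s assms by (intro tendsto_mult survival_tendsto) auto
    then show "(\<lambda>k. n k t s) \<longlonglongrightarrow> ni t s"
      using elim s by simp
  qed
qed

lemma n_L1_tendsto:
  assumes "0 \<le> t"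
  shows "(\<lambda>k. LINT s:{0<..}|lborel. \<bar>n k t s - ni t s\<bar>) \<longlonglongrightarrow> 0"
  unfolding set_lebesgue_integral_real
proof (rule lborel_dominated_convergence_zero(1))
  show "(\<lambda>s. indicator {0<..} s * \<bar>n k t s - ni t s\<bar>) \<in> borel_measurable borel" for k
  proof -
    have "(\<lambda>s. \<bar>indicator {0<..} s * n k t s - indicator {0<..} s * ni t s\<bar>) \<in> borel_measurable borel"
      using n_measurable[OF assms] ni_measurable[OF assms] by measurable
    then show ?thesis
      by (rule measurable_cong[THEN iffD1, rotated]) (auto simp: indicator_def)
  qed
  show "integrable lborel (\<lambda>s. 2 * envelope t s)"
    using envelope_integrable by simp
  show "AE s in lborel. (\<lambda>k. indicator {0<..} s * \<bar>n k t s - ni t s\<bar>) \<longlonglongrightarrow> 0"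
    using n_tendsto[OF assms]
  proof eventually_elim
    case (elim s)
    show ?case
    proof (cases "0 < s")
      case True
      then have "(\<lambda>k. \<bar>n k t s - ni t s\<bar>) \<longlonglongrightarrow> 0"
        using elim by (intro tendsto_rabs_zero LIM_zero) auto
      then show ?thesis
        using True by simp
    qed simp
  qed
  show "AE s in lborel. norm (indicator {0<..} s * \<bar>n k t s - ni t s\<bar>) \<le> 2 * envelope t s" for k
    using abs_n_le_envelope[OF assms]
  proof eventually_elim
    case (elim s)
    show ?case
    proof (cases "0 < s")
      case True
      then have "\<bar>n k t s\<bar> \<le> envelope t s" "\<bar>ni t s\<bar> \<le> envelope t s"
        using elim by auto
      then show ?thesis
        using True abs_triangle_ineq4[of "n k t s" "ni t s"] by simp
    qed (simp add: envelope_nonneg)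
  qed
qed

end

section \<open>Convergence in the age and space variables\<close>

locale renewal_family = rate_limit p pinf P for p pinf P +
  fixes \<Omega> :: "'d::euclidean_space set" and n0 :: "real \<Rightarrow> 'd \<Rightarrow> real" and B :: real
    and S :: "real \<Rightarrow> real \<Rightarrow> 'd \<Rightarrow> real"
    and n :: "real \<Rightarrow> real \<Rightarrow> real \<Rightarrow> 'd \<Rightarrow> real" and N :: "real \<Rightarrow> real \<Rightarrow> 'd \<Rightarrow> real"
    and ninf :: "real \<Rightarrow> real \<Rightarrow> 'd \<Rightarrow> real" and Ninf :: "real \<Rightarrow> 'd \<Rightarrow> real"
  assumes \<Omega>: "\<Omega> \<in> sets borel" "emeasure lborel \<Omega> < \<infinity>"
    and n0_integrable: "\<And>x. x \<in> \<Omega> \<Longrightarrow> set_integrable lborel {0<..} (\<lambda>s. n0 s x)"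
    and n0_L1_bound: "\<And>x. x \<in> \<Omega> \<Longrightarrow> (LINT s:{0<..}|lborel. \<bar>n0 s x\<bar>) \<le> B"
    and sol: "\<And>k. 0 < k \<Longrightarrow> renewal_char (\<lambda>t s x. p s (S k t x)) n0 \<Omega> (n k) (N k)"
    and sol_inf: "renewal_char (\<lambda>t s x. pinf s) n0 \<Omega> ninf Ninf"
    and S_continuous: "\<And>k x. 0 < k \<Longrightarrow> x \<in> \<Omega> \<Longrightarrow> continuous_on {0..} (\<lambda>\<sigma>. S k \<sigma> x)"
begin

lemma fibre:
  assumes "0 < k" "x \<in> \<Omega>"
  shows "renewal_fibre (\<lambda>\<tau> s. p s (S k \<tau> x)) (\<lambda>\<tau> s. n k \<tau> s x) (\<lambda>\<tau>. N k \<tau> x) (\<lambda>s. n0 s x) P B"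
  using renewal_char_fibre[OF sol[OF assms(1)] assms(2) _ n0_integrable[OF assms(2)] n0_L1_bound[OF assms(2)]]
    p_bounds by blast

lemma fibre_inf:
  assumes "x \<in> \<Omega>"
  shows "renewal_fibre (\<lambda>\<tau> s. pinf s) (\<lambda>\<tau> s. ninf \<tau> s x) (\<lambda>\<tau>. Ninf \<tau> x) (\<lambda>s. n0 s x) P B"
  using renewal_char_fibre[OF sol_inf assms _ n0_integrable[OF assms] n0_L1_bound[OF assms]]
    pinf_bounds by blast

lemma fibre_L1_tendsto:
  assumes Y: "\<And>m. 0 < Y m" "filterlim Y at_top sequentially" and x: "x \<in> \<Omega>"
    and S_tendsto: "\<And>\<sigma>. 0 \<le> \<sigma> \<Longrightarrow> filterlim (\<lambda>k. S k \<sigma> x) at_top at_top" and t: "0 \<le> t"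
  shows "(\<lambda>m. LINT s:{0<..}|lborel. \<bar>n (Y m) t s x - ninf t s x\<bar>) \<longlonglongrightarrow> 0"
proof -
  interpret fibre_convergence p pinf P "\<lambda>m \<sigma>. S (Y m) \<sigma> x" "\<lambda>m \<tau> s. n (Y m) \<tau> s x"
    "\<lambda>m \<tau>. N (Y m) \<tau> x" "\<lambda>\<tau> s. ninf \<tau> s x" "\<lambda>\<tau>. Ninf \<tau> x" "\<lambda>s. n0 s x" B
  proof (rule fibre_convergence.intro[OF rate_limit_axioms fibre_convergence_axioms.intro])
    show "renewal_fibre (\<lambda>\<tau> s. p s (S (Y m) \<tau> x)) (\<lambda>\<tau> s. n (Y m) \<tau> s x) (\<lambda>\<tau>. N (Y m) \<tau> x)
        (\<lambda>s. n0 s x) P B" for m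
      by (rule fibre[OF Y(1) x])
    show "continuous_on {0..} (\<lambda>\<sigma>. S (Y m) \<sigma> x)" for m
      by (rule S_continuous[OF Y(1) x])
    show "filterlim (\<lambda>m. S (Y m) \<sigma> x) at_top sequentially" if "0 \<le> \<sigma>" for \<sigma>
      by (rule filterlim_compose[OF S_tendsto[OF that] Y(2)])
  qed (rule fibre_inf[OF x])
  show ?thesis
    using n_L1_tendsto[OF t] by simp
qed

lemma L1_tendsto_sequentially:
  assumes Y: "\<And>m. 0 < Y m" "filterlim Y at_top sequentially"
    and S_tendsto: "AE x in lebesgue. x \<in> \<Omega> \<longrightarrow> (\<forall>\<sigma>\<ge>0. filterlim (\<lambda>k. S k \<sigma> x) at_top at_top)"
    and t: "0 \<le> t"
  shows "(\<lambda>m. LINT z:({0<..} \<times> \<Omega>)|lebesgue. \<bar>n (Y m) t (fst z) (snd z) - ninf t (fst z) (snd z)\<bar>)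
           \<longlonglongrightarrow> 0"
proof (rule L1_prod_tendsto_zero_of_fibres[OF \<Omega>])
  show "integrable (lebesgue_on ({0<..} \<times> \<Omega>)) (\<lambda>z. n (Y m) t (fst z) (snd z))" for m
    using sol[OF Y(1)] t unfolding renewal_char_def by blast
  show "set_integrable lborel {0<..} (\<lambda>s. n (Y m) t s x)" if "x \<in> \<Omega>" for m x
    using sol[OF Y(1)] t that unfolding renewal_char_def by blast
  show "integrable (lebesgue_on ({0<..} \<times> \<Omega>)) (\<lambda>z. ninf t (fst z) (snd z))"
    using sol_inf t unfolding renewal_char_def by blast
  show "set_integrable lborel {0<..} (\<lambda>s. ninf t s x)" if "x \<in> \<Omega>" for x
    using sol_inf t that unfolding renewal_char_def by blast
  show "(LINT s:{0<..}|lborel. \<bar>n (Y m) t s x - ninf t s x\<bar>) \<le> 2 * (B + t * (P * B * exp (P * t)))"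
    if "x \<in> \<Omega>" for m x
    by (rule renewal_fibres_L1_dist_bound[OF fibre[OF Y(1) that] fibre_inf[OF that] t])
  show "AE x in lebesgue. x \<in> \<Omega> \<longrightarrow> (\<lambda>m. LINT s:{0<..}|lborel. \<bar>n (Y m) t s x - ninf t s x\<bar>) \<longlonglongrightarrow> 0"
    using S_tendsto by eventually_elim (auto intro: fibre_L1_tendsto[OF Y _ _ t])
qed

theorem L1_tendsto:
  assumes S_tendsto: "AE x in lebesgue. x \<in> \<Omega> \<longrightarrow> (\<forall>\<sigma>\<ge>0. filterlim (\<lambda>k. S k \<sigma> x) at_top at_top)"
    and t: "0 \<le> t"
  shows "((\<lambda>k. LINT z:({0<..} \<times> \<Omega>)|lebesgue. \<bar>n k t (fst z) (snd z) - ninf t (fst z) (snd z)\<bar>)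
           \<longlongrightarrow> 0) at_top"
proof (rule tendsto_at_topI_sequentially)
  fix X :: "nat \<Rightarrow> real"
  assume X: "filterlim X at_top sequentially"
  define Y where "Y m = max 1 (X m)" for m
  have Y: "filterlim Y at_top sequentially"
    by (rule filterlim_at_top_mono[OF X]) (simp add: Y_def always_eventually)
  have Y_tendsto: "(\<lambda>m. LINT z:({0<..} \<times> \<Omega>)|lebesgue. \<bar>n (Y m) t (fst z) (snd z) - ninf t (fst z) (snd z)\<bar>)
      \<longlonglongrightarrow> 0"
    by (rule L1_tendsto_sequentially[OF _ Y S_tendsto t]) (simp add: Y_def)
  have "\<forall>\<^sub>F m in sequentially. X m = Y m"
    using filterlim_at_top[THEN iffD1, OF X, rule_format, of 1] by eventually_elim (simp add: Y_def)
  then have "\<forall>\<^sub>F m in sequentially.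
      (LINT z:({0<..} \<times> \<Omega>)|lebesgue. \<bar>n (X m) t (fst z) (snd z) - ninf t (fst z) (snd z)\<bar>) =
      (LINT z:({0<..} \<times> \<Omega>)|lebesgue. \<bar>n (Y m) t (fst z) (snd z) - ninf t (fst z) (snd z)\<bar>)"
    by eventually_elim simp
  from this Y_tendsto
  show "(\<lambda>m. LINT z:({0<..} \<times> \<Omega>)|lebesgue. \<bar>n (X m) t (fst z) (snd z) - ninf t (fst z) (snd z)\<bar>)
      \<longlonglongrightarrow> 0"
    by (rule tendsto_cong[THEN iffD2])
qed

end

lemma continuous_on_signal:
  fixes w :: "real \<Rightarrow> 'd::euclidean_space \<Rightarrow> 'd \<Rightarrow> real" and N :: "real \<Rightarrow> 'd \<Rightarrow> real"
  assumes \<Omega>: "\<Omega> \<in> sets borel" "emeasure lborel \<Omega> < \<infinity>" and x: "x \<in> \<Omega>"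
    and w: "continuous_on ({0..} \<times> \<Omega> \<times> \<Omega>) (\<lambda>z. w (fst z) (fst (snd z)) (snd (snd z)))"
    and N: "continuous_on ({0..} \<times> \<Omega>) (\<lambda>z. N (fst z) (snd z))"
    and bound: "\<And>T. \<exists>M. \<forall>\<sigma>\<in>{0..T}. \<forall>y\<in>\<Omega>. \<bar>w \<sigma> x y * N \<sigma> y\<bar> \<le> M"
  shows "continuous_on {0..} (\<lambda>\<sigma>. LINT y:\<Omega>|lebesgue. w \<sigma> x y * N \<sigma> y)"
proof (rule continuous_on_set_integral_parameter[OF \<Omega> _ bound])
  have "continuous_on ({0..} \<times> \<Omega>) (\<lambda>z. (\<lambda>z. w (fst z) (fst (snd z)) (snd (snd z))) (fst z, x, snd z))"
    by (rule continuous_on_compose2[OF w]) (use x in \<open>auto intro!: continuous_intros\<close>)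
  with N show "continuous_on ({0..} \<times> \<Omega>) (\<lambda>z. w (fst z) x (snd z) * N (fst z) (snd z))"
    by (auto intro: continuous_intros)
qed

section \<open>The signal of the nonlinear system\<close>

lemma abs_duhamel_le:
  fixes h :: "real \<Rightarrow> real"
  assumes "0 \<le> \<sigma>" "0 \<le> \<gamma>" "\<And>\<tau>. \<bar>h \<tau>\<bar> \<le> 1"
  shows "\<bar>exp (- \<sigma>) * w + \<gamma> * integral {0..\<sigma>} (\<lambda>\<tau>. exp (- (\<sigma> - \<tau>)) * h \<tau>)\<bar> \<le> \<bar>w\<bar> + \<gamma> * \<sigma>"
proof -
  have "\<bar>exp (- \<sigma>) * w\<bar> \<le> \<bar>w\<bar>"
    using assms(1) by (simp add: abs_mult mult_left_le_one_le)
  moreover have "\<bar>integral {0..\<sigma>} (\<lambda>\<tau>. exp (- (\<sigma> - \<tau>)) * h \<tau>)\<bar> \<le> 1 * \<sigma>"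
  proof (rule abs_integral_le_const[OF assms(1)])
    fix \<tau> assume "\<tau> \<in> {0..\<sigma>}"
    then show "\<bar>exp (- (\<sigma> - \<tau>)) * h \<tau>\<bar> \<le> 1"
      using assms(3)[of \<tau>] by (simp add: abs_mult mult_le_one)
  qed
  then have "\<bar>\<gamma> * integral {0..\<sigma>} (\<lambda>\<tau>. exp (- (\<sigma> - \<tau>)) * h \<tau>)\<bar> \<le> \<gamma> * \<sigma>"
    using assms(2) by (simp add: abs_mult mult_left_mono)
  ultimately show ?thesis
    using abs_triangle_ineq[of "exp (- \<sigma>) * w" "\<gamma> * integral {0..\<sigma>} (\<lambda>\<tau>. exp (- (\<sigma> - \<tau>)) * h \<tau>)"]
    by linarith
qed

lemma nonlinear_solution_signal:
  fixes \<Omega> :: "'d::euclidean_space set" and I :: "'d \<Rightarrow> real"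
  assumes sol: "nonlinear_solution p G \<gamma> I k \<Omega> n0 w0 n"
    and \<Omega>: "\<Omega> \<in> sets borel" "emeasure lborel \<Omega> < \<infinity>"
    and p_bounds: "\<And>s S. 0 \<le> s \<Longrightarrow> 0 \<le> p s S \<and> p s S \<le> P"
    and G: "\<And>a b. \<bar>G a b\<bar> \<le> 1" and \<gamma>: "0 \<le> \<gamma>"
    and w0: "\<And>x y. x \<in> \<Omega> \<Longrightarrow> y \<in> \<Omega> \<Longrightarrow> \<bar>w0 x y\<bar> \<le> W0"
    and n0_integrable: "\<And>x. x \<in> \<Omega> \<Longrightarrow> set_integrable lborel {0<..} (\<lambda>s. n0 s x)"
    and n0_L1_bound: "\<And>x. x \<in> \<Omega> \<Longrightarrow> (LINT s:{0<..}|lborel. \<bar>n0 s x\<bar>) \<le> B"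
  shows "\<exists>N S. renewal_char (\<lambda>t s x. p s (S t x)) n0 \<Omega> n N \<and>
    (\<forall>x\<in>\<Omega>. continuous_on {0..} (\<lambda>\<sigma>. S \<sigma> x)) \<and>
    (\<forall>\<sigma>\<ge>0. \<forall>x\<in>\<Omega>. k * I x - (W0 + \<gamma> * \<sigma>) * (P * B * exp (P * \<sigma>)) * measure lebesgue \<Omega> \<le> S \<sigma> x)"
proof -
  obtain N w S where rc: "renewal_char (\<lambda>t s x. p s (S t x)) n0 \<Omega> n N"
    and w_cont: "continuous_on ({0..} \<times> \<Omega> \<times> \<Omega>) (\<lambda>z. w (fst z) (fst (snd z)) (snd (snd z)))"
    and S_eq: "\<And>\<sigma> x. 0 \<le> \<sigma> \<Longrightarrow> x \<in> \<Omega> \<Longrightarrow> S \<sigma> x = (LINT y:\<Omega>|lebesgue. w \<sigma> x y * N \<sigma> y) + k * I x"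
    and w_eq: "\<And>\<sigma> x y. 0 \<le> \<sigma> \<Longrightarrow> x \<in> \<Omega> \<Longrightarrow> y \<in> \<Omega> \<Longrightarrow>
      w \<sigma> x y = exp (- \<sigma>) * w0 x y + \<gamma> * integral {0..\<sigma>} (\<lambda>\<tau>. exp (- (\<sigma> - \<tau>)) * G (N \<tau> x) (N \<tau> y))"
    using sol unfolding nonlinear_solution_def by blast
  define C where "C \<sigma> = P * B * exp (P * \<sigma>)" for \<sigma>
  have N_bound: "\<bar>N \<sigma> y\<bar> \<le> C T" if "y \<in> \<Omega>" "0 \<le> \<sigma>" "\<sigma> \<le> T" for \<sigma> y T
    unfolding C_def using rc that p_bounds n0_integrable n0_L1_bound by (rule renewal_char_abs_N_bound)
  have wN_bound: "\<bar>w \<sigma> x y * N \<sigma> y\<bar> \<le> (W0 + \<gamma> * T) * C T"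
    if "0 \<le> \<sigma>" "\<sigma> \<le> T" "x \<in> \<Omega>" "y \<in> \<Omega>" for \<sigma> x y T
  proof -
    have "\<bar>w \<sigma> x y\<bar> \<le> \<bar>w0 x y\<bar> + \<gamma> * \<sigma>"
      unfolding w_eq[OF that(1,3,4)] using that(1) \<gamma> G by (rule abs_duhamel_le)
    also have "\<dots> \<le> W0 + \<gamma> * T"
      using w0[OF that(3,4)] that(2) \<gamma> by (simp add: add_mono mult_left_mono)
    finally show ?thesis
      unfolding abs_mult using N_bound[OF that(4,1,2)] by (intro mult_mono) auto
  qed
  have lower: "k * I x - (W0 + \<gamma> * \<sigma>) * C \<sigma> * measure lebesgue \<Omega> \<le> S \<sigma> x"
    if "0 \<le> \<sigma>" "x \<in> \<Omega>" for \<sigma> x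
  proof -
    have "\<bar>LINT y:\<Omega>|lebesgue. w \<sigma> x y * N \<sigma> y\<bar> \<le> (W0 + \<gamma> * \<sigma>) * C \<sigma> * measure lebesgue \<Omega>"
      using \<Omega> wN_bound[OF that(1) order_refl that(2)]
      by (intro abs_set_integral_le_measure) (auto simp: emeasure_completion)
    then show ?thesis
      using S_eq[OF that] by linarith
  qed
  have continuous: "continuous_on {0..} (\<lambda>\<sigma>. S \<sigma> x)" if "x \<in> \<Omega>" for x
  proof -
    have "continuous_on ({0..} \<times> \<Omega>) (\<lambda>z. N (fst z) (snd z))"
      using rc unfolding renewal_char_def by blast
    then have "continuous_on {0..} (\<lambda>\<sigma>. (LINT y:\<Omega>|lebesgue. w \<sigma> x y * N \<sigma> y) + k * I x)"
    proof (intro continuous_intros continuous_on_signal[OF \<Omega> that w_cont])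
      show "\<exists>M. \<forall>\<sigma>\<in>{0..T}. \<forall>y\<in>\<Omega>. \<bar>w \<sigma> x y * N \<sigma> y\<bar> \<le> M" for T
        using wN_bound that by (intro exI[of _ "(W0 + \<gamma> * T) * C T"]) auto
    qed
    then show ?thesis
      by (rule continuous_on_cong[THEN iffD1, rotated 2]) (use S_eq that in auto)
  qed
  show ?thesis
    using rc continuous lower unfolding C_def by blast
qed

lemma filterlim_at_top_linear_lower_bound:
  fixes f :: "real \<Rightarrow> real"
  assumes "0 < c" and "\<And>k. 0 < k \<Longrightarrow> k * c - K \<le> f k"
  shows "filterlim f at_top at_top"
proof (rule filterlim_at_top_mono)
  have "filterlim (\<lambda>k. c * k) at_top at_top"
    by (rule filterlim_tendsto_pos_mult_at_top[OF tendsto_const assms(1) filterlim_ident])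
  then show "filterlim (\<lambda>k. - K + c * k) at_top at_top"
    by (rule filterlim_tendsto_add_at_top[OF tendsto_const])
  show "\<forall>\<^sub>F k in at_top. - K + c * k \<le> f k"
    using eventually_gt_at_top[of 0] by eventually_elim (use assms(2) in \<open>auto simp: mult.commute\<close>)
qed

lemma nonlinear_solutions_signal_tendsto:
  fixes \<Omega> :: "'d::euclidean_space set" and I :: "'d \<Rightarrow> real"
  assumes sol: "\<And>k. 0 < k \<Longrightarrow> nonlinear_solution p G \<gamma> I k \<Omega> n0 w0 (n k)"
    and I_pos: "AE x in lebesgue. x \<in> \<Omega> \<longrightarrow> 0 < I x"
    and \<Omega>: "\<Omega> \<in> sets borel" "emeasure lborel \<Omega> < \<infinity>"
    and p_bounds: "\<And>s S. 0 \<le> s \<Longrightarrow> 0 \<le> p s S \<and> p s S \<le> P"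
    and G: "\<And>a b. \<bar>G a b\<bar> \<le> 1" and \<gamma>: "0 \<le> \<gamma>"
    and w0: "\<And>x y. x \<in> \<Omega> \<Longrightarrow> y \<in> \<Omega> \<Longrightarrow> \<bar>w0 x y\<bar> \<le> W0"
    and n0_integrable: "\<And>x. x \<in> \<Omega> \<Longrightarrow> set_integrable lborel {0<..} (\<lambda>s. n0 s x)"
    and n0_L1_bound: "\<And>x. x \<in> \<Omega> \<Longrightarrow> (LINT s:{0<..}|lborel. \<bar>n0 s x\<bar>) \<le> B"
  obtains N S
  where "\<And>k. 0 < k \<Longrightarrow> renewal_char (\<lambda>t s x. p s (S k t x)) n0 \<Omega> (n k) (N k)"
    and "\<And>k x. 0 < k \<Longrightarrow> x \<in> \<Omega> \<Longrightarrow> continuous_on {0..} (\<lambda>\<sigma>. S k \<sigma> x)"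
    and "AE x in lebesgue. x \<in> \<Omega> \<longrightarrow> (\<forall>\<sigma>\<ge>0. filterlim (\<lambda>k. S k \<sigma> x) at_top at_top)"
proof -
  define K where "K \<sigma> = (W0 + \<gamma> * \<sigma>) * (P * B * exp (P * \<sigma>)) * measure lebesgue \<Omega>" for \<sigma>
  have "\<exists>N S. renewal_char (\<lambda>t s x. p s (S t x)) n0 \<Omega> (n k) N \<and>
      (\<forall>x\<in>\<Omega>. continuous_on {0..} (\<lambda>\<sigma>. S \<sigma> x)) \<and> (\<forall>\<sigma>\<ge>0. \<forall>x\<in>\<Omega>. k * I x - K \<sigma> \<le> S \<sigma> x)"
    if "0 < k" for k
    unfolding K_def
    by (rule nonlinear_solution_signal[OF sol[OF that] \<Omega> p_bounds G \<gamma> w0 n0_integrable n0_L1_bound])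
  then obtain N S
    where sol: "\<And>k. 0 < k \<Longrightarrow> renewal_char (\<lambda>t s x. p s (S k t x)) n0 \<Omega> (n k) (N k)"
      and S_continuous: "\<And>k x. 0 < k \<Longrightarrow> x \<in> \<Omega> \<Longrightarrow> continuous_on {0..} (\<lambda>\<sigma>. S k \<sigma> x)"
      and S_lower: "\<And>k \<sigma> x. 0 < k \<Longrightarrow> 0 \<le> \<sigma> \<Longrightarrow> x \<in> \<Omega> \<Longrightarrow> k * I x - K \<sigma> \<le> S k \<sigma> x"
    by metis
  have "AE x in lebesgue. x \<in> \<Omega> \<longrightarrow> (\<forall>\<sigma>\<ge>0. filterlim (\<lambda>k. S k \<sigma> x) at_top at_top)"
    using I_pos by eventually_elim (auto intro: filterlim_at_top_linear_lower_bound S_lower)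
  with sol S_continuous show ?thesis
    by (rule that)
qed

lemma abs_le_1_of_C1_bound:
  fixes G :: "real \<Rightarrow> real \<Rightarrow> real" and DG :: "nat \<Rightarrow> nat \<Rightarrow> real \<Rightarrow> real \<Rightarrow> real"
  assumes "\<exists>a b. a + b \<le> 1 \<and> (\<forall>x y. \<bar>G x y\<bar> \<le> a) \<and>
             (\<forall>x y. sqrt ((DG 1 0 x y)\<^sup>2 + (DG 0 1 x y)\<^sup>2) \<le> b)"
  shows "\<bar>G x y\<bar> \<le> 1"
proof -
  obtain a b where "a + b \<le> 1" "\<bar>G x y\<bar> \<le> a" "sqrt ((DG 1 0 x y)\<^sup>2 + (DG 0 1 x y)\<^sup>2) \<le> b"
    using assms by blast
  moreover have "0 \<le> sqrt ((DG 1 0 x y)\<^sup>2 + (DG 0 1 x y)\<^sup>2)"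
    by simp
  ultimately show ?thesis
    by linarith
qed

theorem mainTheorem9:
  fixes \<Omega> :: "'d::euclidean_space set"
    and \<gamma> :: real
    and G :: "real \<Rightarrow> real \<Rightarrow> real"
    and DG :: "nat \<Rightarrow> nat \<Rightarrow> real \<Rightarrow> real \<Rightarrow> real"
    and I :: "'d \<Rightarrow> real"
    and n0 :: "real \<Rightarrow> 'd \<Rightarrow> real"
    and w0 :: "'d \<Rightarrow> 'd \<Rightarrow> real"
    and p :: "real \<Rightarrow> real \<Rightarrow> real"
    and pinf :: "real \<Rightarrow> real"
    and p_star p_inf s_star :: real
    and nk :: "real \<Rightarrow> real \<Rightarrow> real \<Rightarrow> 'd \<Rightarrow> real"
    and ninf :: "real \<Rightarrow> real \<Rightarrow> 'd \<Rightarrow> real"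
  assumes dom: "bounded_domain \<Omega>"
    and gamma: "\<gamma> > 0"
    and G_smooth: "smooth2 G DG"
    and G_bound: "\<exists>a b. a + b \<le> 1 \<and> (\<forall>x y. \<bar>G x y\<bar> \<le> a) \<and>
                     (\<forall>x y. sqrt ((DG 1 0 x y)\<^sup>2 + (DG 0 1 x y)\<^sup>2) \<le> b)"
    and I_cont: "continuous_on \<Omega> I" and I_bdd: "bounded (I ` \<Omega>)"
    and I_pos: "AE x in lebesgue. x \<in> \<Omega> \<longrightarrow> I x > 0"
    and n0_Cb: "Cb_L1 \<Omega> n0"
    and n0_nonneg: "\<forall>x\<in>\<Omega>. AE s in lborel. s > 0 \<longrightarrow> n0 s x \<ge> 0"
    and w0_cont: "continuous_on (\<Omega> \<times> \<Omega>) (\<lambda>z. w0 (fst z) (snd z))"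
    and w0_bdd: "bounded ((\<lambda>z. w0 (fst z) (snd z)) ` (\<Omega> \<times> \<Omega>))"
    and w0_nonneg: "\<forall>x\<in>\<Omega>. \<forall>y\<in>\<Omega>. w0 x y \<ge> 0"
    and g_mass: "(LINT x:\<Omega>|lebesgue. (LINT s:{0<..}|lborel. n0 s x)) = 1"
    and p_W1inf: "\<exists>L. \<forall>s1\<ge>0. \<forall>s2\<ge>0. \<forall>S1 S2.
                     \<bar>p s1 S1 - p s2 S2\<bar> \<le> L * dist (s1, S1) (s2, S2)"
    and consts_pos: "p_star > 0" "p_inf > 0" "s_star > 0"
    and p_bounds: "\<forall>s\<ge>0. \<forall>S. p_star * (if s > s_star then 1 else 0) \<le> p s S \<and> p s S \<le> p_inf"
    and p_limit: "\<forall>s\<ge>0. ((\<lambda>S. p s S) \<longlongrightarrow> pinf s) at_top"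
    and nk_sol: "\<forall>k>0. nonlinear_solution p G \<gamma> I k \<Omega> n0 w0 (nk k)"
    and ninf_sol: "linear_solution pinf \<Omega> n0 ninf"
  shows "\<forall>t>0. ((\<lambda>k. LINT z:({0<..} \<times> \<Omega>)|lebesgue.
                     \<bar>nk k t (fst z) (snd z) - ninf t (fst z) (snd z)\<bar>) \<longlongrightarrow> 0) at_top"
proof (intro allI impI)
  fix t :: real
  assume "0 < t"
  have \<Omega>: "\<Omega> \<in> sets borel" "emeasure lborel \<Omega> < \<infinity>"
    using dom emeasure_bounded_finite[of \<Omega>] by (auto simp: bounded_domain_def)
  have p_bounds': "0 \<le> p s S \<and> p s S \<le> p_inf" if "0 \<le> s" for s S
    using p_bounds consts_pos that by (smt (verit) mult_nonneg_nonneg)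
  interpret rate_limit p pinf p_inf
    using p_W1inf p_bounds' p_limit by (rule rate_limitI)
  obtain B where B: "\<And>x. x \<in> \<Omega> \<Longrightarrow> (LINT s:{0<..}|lborel. \<bar>n0 s x\<bar>) \<le> B"
    and n0_integrable: "\<And>x. x \<in> \<Omega> \<Longrightarrow> set_integrable lborel {0<..} (\<lambda>s. n0 s x)"
    using n0_Cb unfolding Cb_L1_def by blast
  obtain W0 where W0: "\<And>x y. x \<in> \<Omega> \<Longrightarrow> y \<in> \<Omega> \<Longrightarrow> \<bar>w0 x y\<bar> \<le> W0"
    using w0_bdd unfolding bounded_iff by fastforce
  obtain N S
    where sol: "\<And>k. 0 < k \<Longrightarrow> renewal_char (\<lambda>t s x. p s (S k t x)) n0 \<Omega> (nk k) (N k)"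
      and S_continuous: "\<And>k x. 0 < k \<Longrightarrow> x \<in> \<Omega> \<Longrightarrow> continuous_on {0..} (\<lambda>\<sigma>. S k \<sigma> x)"
      and S_tendsto: "AE x in lebesgue. x \<in> \<Omega> \<longrightarrow> (\<forall>\<sigma>\<ge>0. filterlim (\<lambda>k. S k \<sigma> x) at_top at_top)"
    by (rule nonlinear_solutions_signal_tendsto[OF nk_sol[rule_format] I_pos \<Omega> p_bounds'
          abs_le_1_of_C1_bound[OF G_bound] less_imp_le[OF gamma] W0 n0_integrable B])
      (auto intro: that)
  obtain Ninf where sol_inf: "renewal_char (\<lambda>t s x. pinf s) n0 \<Omega> ninf Ninf"
    using ninf_sol unfolding linear_solution_def by blast
  interpret renewal_family p pinf p_inf \<Omega> n0 B S nk N ninf Ninf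
    by (rule renewal_family.intro[OF rate_limit_axioms renewal_family_axioms.intro])
      (use \<Omega> n0_integrable B sol sol_inf S_continuous in auto)
  show "((\<lambda>k. LINT z:({0<..} \<times> \<Omega>)|lebesgue. \<bar>nk k t (fst z) (snd z) - ninf t (fst z) (snd z)\<bar>)
      \<longlongrightarrow> 0) at_top"
    using L1_tendsto[OF S_tendsto] \<open>0 < t\<close> by simp
qed

end
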